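(* Let $f,g,h$ be nonnegative continuous functions on $[0,1]$, differentiable on $(0,1)$, positive on $(0,1]$, with $F=\log f$, $G=\log g$, $H=\log h$ such that $F'(x)\neq 0$ on $(0,1)$ and $F(x)\neq F(y)$ for $x\neq y$. Assume one of the following: (I) $(f,g)$ and $(f,h)$ are both CLI monotone pairs and $$1+\frac{G(y)-G(x)}{F(y)-F(x)}\le \frac{H(y)-H(x)}{F(y)-F(x)}\quad\text{for all } x<y;$$ (II) $(f,g)$ is a CLI monotone pair, $(f,h)$ is a CLI anti-monotone pair, and $$1+\frac{G(y)-G(x)}{F(y)-F(x)}+\frac{H(y)-H(x)}{F(y)-F(x)}\ge 0\quad\text{for all } x<y.$$ Then for every $\rho\in M_{n,+,1}(\mathbb{C})$ and all $A,B\in M_{n,sa}(\mathbb{C})$, $$U_{\rho,(f,g,h)}(A)\,U_{\rho,(f,g,h)}(B)\ \ge\ \beta(f,g,h)\,\big|\mathrm{Tr}[f(\rho)g(\rho)h(\rho)[A,B]]\big|^2 .$$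
   Context: $M_{n,sa}(\mathbb{C})$ denotes the $n\times n$ self-adjoint complex matrices and $M_{n,+,1}(\mathbb{C})=\{\rho\in M_n(\mathbb{C}):\rho>0,\ \mathrm{Tr}\rho=1\}$ the strictly positive density matrices; $f(\rho)$ etc. denote functional calculus. $[X,Y]=XY-YX$, $\{X,Y\}=XY+YX$. For $H\in M_{n,sa}(\mathbb{C})$ put $H_0=H-\mathrm{Tr}[\rho H]I$, and define $I_{\rho,(f,g,h)}(H)=\tfrac12\mathrm{Tr}[(i[f(\rho),H_0])(i[g(\rho),H_0])h(\rho)]$, $J_{\rho,(f,g,h)}(H)=\tfrac12\mathrm{Tr}[\{f(\rho),H_0\}\{g(\rho),H_0\}h(\rho)]$, $U_{\rho,(f,g,h)}(H)=\sqrt{I_{\rho,(f,g,h)}(H)J_{\rho,(f,g,h)}(H)}$. A pair $(f,g)$ of nonnegative continuous functions on $[0,1]$, differentiable on $(0,1)$, with $F=\log f$, $G=\log g$, is a CLI monotone pair if (a) $(f(x)-f(y))(g(x)-g(y))\ge 0$ for all $x,y\in[0,1]$ and (b) $0\le \inf_{0<x<1}G'(x)/F'(x)\le\sup_{0<x<1}G'(x)/F'(x)<\infty$; it is a CLI anti-monotone pair if (a) $(f(x)-f(y))(g(x)-g(y))\le 0$ for all $x,y$ and (b) $-\infty<\inf_{0<x<1}G'(x)/F'(x)\le\sup_{0<x<1}G'(x)/F'(x)\le 0$. With $m=\inf_{0<x<1}G'/F'$, $M=\sup_{0<x<1}G'/F'$, $n=\inf_{0<x<1}H'/F'$, $N=\sup_{0<x<1}H'/F'$,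 define $$\beta(f,g,h)=\min\Big\{\frac{m}{(1+m+n)^2},\frac{m}{(1+m+N)^2},\frac{M}{(1+M+n)^2},\frac{M}{(1+M+N)^2}\Big\}.$$ *)

theory Defs
  imports "HOL-Analysis.Analysis"
begin

definition cmat_trace :: "complex^'n^'n \<Rightarrow> complex" where
  "cmat_trace A = (\<Sum>i\<in>UNIV. A $ i $ i)"

definition cmat_adjoint :: "complex^'n^'n \<Rightarrow> complex^'n^'n" where
  "cmat_adjoint A = (\<chi> i j. cnj (A $ j $ i))"

definition cmat_hermitian :: "complex^'n^'n \<Rightarrow> bool" where
  "cmat_hermitian A \<longleftrightarrow> cmat_adjoint A = A"

definition cmat_unitary :: "complex^'n^'n \<Rightarrow> bool" where
  "cmat_unitary U \<longleftrightarrow> cmat_adjoint U ** U = mat 1 \<and> U ** cmat_adjoint U = mat 1"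

definition cmat_diag :: "('n \<Rightarrow> complex) \<Rightarrow> complex^'n^'n" where
  "cmat_diag d = (\<chi> i j. if i = j then d i else 0)"

definition cmat_posdef :: "complex^'n^'n \<Rightarrow> bool" where
  "cmat_posdef A \<longleftrightarrow> cmat_hermitian A \<and>
     (\<forall>v::complex^'n. v \<noteq> 0 \<longrightarrow> 0 < Re (\<Sum>i\<in>UNIV. cnj (v $ i) * (A *v v) $ i))"

definition density_pos :: "complex^'n^'n \<Rightarrow> bool" where
  "density_pos \<rho> \<longleftrightarrow> cmat_posdef \<rho> \<and> cmat_trace \<rho> = 1"

text \<open>Functional calculus for Hermitian matrices: if A = U diag(d) U^* with U unitary and
  d real, then f(A) = U diag(f(d)) U^* (independent of the chosen decomposition).\<close>
definition mat_fun :: "(real \<Rightarrow> real) \<Rightarrow> complex^'n^'n \<Rightarrow> complex^'n^'n" where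
  "mat_fun f A = (SOME B. \<exists>U d. cmat_unitary U \<and> (\<forall>i. d i \<in> \<real>) \<and>
      A = U ** cmat_diag d ** cmat_adjoint U \<and>
      B = U ** cmat_diag (\<lambda>i. complex_of_real (f (Re (d i)))) ** cmat_adjoint U)"

definition commutator :: "complex^'n^'n \<Rightarrow> complex^'n^'n \<Rightarrow> complex^'n^'n" where
  "commutator X Y = X ** Y - Y ** X"

definition anticommutator :: "complex^'n^'n \<Rightarrow> complex^'n^'n \<Rightarrow> complex^'n^'n" where
  "anticommutator X Y = X ** Y + Y ** X"

definition centered :: "complex^'n^'n \<Rightarrow> complex^'n^'n \<Rightarrow> complex^'n^'n" where
  "centered \<rho> H = H - mat (cmat_trace (\<rho> ** H))"

text \<open>The traces defining I and J are real for Hermitian H and rho; we take the real part.\<close>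
definition I_corr :: "complex^'n^'n \<Rightarrow> (real \<Rightarrow> real) \<Rightarrow> (real \<Rightarrow> real) \<Rightarrow> (real \<Rightarrow> real)
    \<Rightarrow> complex^'n^'n \<Rightarrow> real" where
  "I_corr \<rho> f g h H = (let H0 = centered \<rho> H in
     Re (cmat_trace ((mat \<i> ** commutator (mat_fun f \<rho>) H0) ** (mat \<i> ** commutator (mat_fun g \<rho>) H0)
        ** mat_fun h \<rho>)) / 2)"

definition J_corr :: "complex^'n^'n \<Rightarrow> (real \<Rightarrow> real) \<Rightarrow> (real \<Rightarrow> real) \<Rightarrow> (real \<Rightarrow> real)
    \<Rightarrow> complex^'n^'n \<Rightarrow> real" where
  "J_corr \<rho> f g h H = (let H0 = centered \<rho> H in
     Re (cmat_trace (anticommutator (mat_fun f \<rho>) H0 ** anticommutator (mat_fun g \<rho>) H0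
        ** mat_fun h \<rho>)) / 2)"

definition U_corr :: "complex^'n^'n \<Rightarrow> (real \<Rightarrow> real) \<Rightarrow> (real \<Rightarrow> real) \<Rightarrow> (real \<Rightarrow> real)
    \<Rightarrow> complex^'n^'n \<Rightarrow> real" where
  "U_corr \<rho> f g h H = sqrt (I_corr \<rho> f g h H * J_corr \<rho> f g h H)"

definition log_deriv_ratio :: "(real \<Rightarrow> real) \<Rightarrow> (real \<Rightarrow> real) \<Rightarrow> real \<Rightarrow> real" where
  "log_deriv_ratio f g x = deriv (\<lambda>t. ln (g t)) x / deriv (\<lambda>t. ln (f t)) x"

definition cli_monotone_pair :: "(real \<Rightarrow> real) \<Rightarrow> (real \<Rightarrow> real) \<Rightarrow> bool" where
  "cli_monotone_pair f g \<longleftrightarrow>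
     (\<forall>x\<in>{0..1}. \<forall>y\<in>{0..1}. (f x - f y) * (g x - g y) \<ge> 0) \<and>
     bdd_below (log_deriv_ratio f g ` {0<..<1}) \<and> bdd_above (log_deriv_ratio f g ` {0<..<1}) \<and>
     0 \<le> Inf (log_deriv_ratio f g ` {0<..<1})"

definition cli_antimonotone_pair :: "(real \<Rightarrow> real) \<Rightarrow> (real \<Rightarrow> real) \<Rightarrow> bool" where
  "cli_antimonotone_pair f g \<longleftrightarrow>
     (\<forall>x\<in>{0..1}. \<forall>y\<in>{0..1}. (f x - f y) * (g x - g y) \<le> 0) \<and>
     bdd_below (log_deriv_ratio f g ` {0<..<1}) \<and> bdd_above (log_deriv_ratio f g ` {0<..<1}) \<and>
     Sup (log_deriv_ratio f g ` {0<..<1}) \<le> 0"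

definition beta_const :: "(real \<Rightarrow> real) \<Rightarrow> (real \<Rightarrow> real) \<Rightarrow> (real \<Rightarrow> real) \<Rightarrow> real" where
  "beta_const f g h = (let
      m = Inf (log_deriv_ratio f g ` {0<..<1}); M = Sup (log_deriv_ratio f g ` {0<..<1});
      n = Inf (log_deriv_ratio f h ` {0<..<1}); N = Sup (log_deriv_ratio f h ` {0<..<1})
    in Min {m / (1 + m + n)^2, m / (1 + m + N)^2, M / (1 + M + n)^2, M / (1 + M + N)^2})"

end

theory Submission
  imports Defs
begin

text \<open>
  Diagonalize $\rho = U\,\mathrm{diag}(\lambda)\,U^*$ (spectral theorem, proved here) and write
  $X, Y$ for $A_0, B_0$ in that eigenbasis.  Then $I(A)$, $J(A)$ and
  $T = \mathrm{Tr}[f(\rho)g(\rho)h(\rho)[A,B]]$ become double sums over pairs of eigenvalues, weighted by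
  $|X_{ij}|^2$ resp. $X_{ij}Y_{ji}$.  The theorem then follows from weighted Cauchy--Schwarz once the
  pairwise inequality
  $16\beta\,(f_xg_xh_x - f_yg_yh_y)^2 \le (f_x-f_y)(g_x-g_y)(f_x+f_y)(g_x+g_y)(h_x+h_y)^2$
  holds for all $x,y \in (0,1]$.  Writing $f_x/f_y = e^{2a}$ etc., the pairwise inequality is a
  hyperbolic inequality $4\beta\sinh^2(a+b+c) \le \sinh 2a\,\sinh 2b\,\cosh^2 c$; by Cauchy's mean
  value theorem the ratios $b/a$ and $c/a$ are values of $G'/F'$ and $H'/F'$, so $\beta$ controls
  them, and the hypotheses (I)/(II) give exactly the sign conditions the hyperbolic inequality needs.
\<close>

section \<open>Hyperbolic inequalities\<close>

lemma sinh_le_mult_cosh: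
  fixes t :: real
  assumes "0 \<le> t"
  shows "sinh t \<le> t * cosh t"
proof -
  have "(\<lambda>s. s * cosh s - sinh s) 0 \<le> (\<lambda>s. s * cosh s - sinh s) t"
  proof (rule DERIV_nonneg_imp_nondecreasing[OF assms])
    fix x :: real assume "0 \<le> x" "x \<le> t"
    show "\<exists>y. ((\<lambda>s. s * cosh s - sinh s) has_real_derivative y) (at x) \<and> 0 \<le> y"
      by (rule exI[of _ "x * sinh x"]) (auto intro!: derivative_eq_intros simp: \<open>0 \<le> x\<close>)
  qed
  thus ?thesis by simp
qed

text \<open>$\sinh s / s$ is nondecreasing on $[0,\infty)$, in cross-multiplied form.\<close>

lemma sinh_ratio_mono:
  fixes u v :: real
  assumes "0 \<le> v" "v \<le> u"
  shows "u * sinh v \<le> v * sinh u"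
proof (cases "v = 0")
  case True thus ?thesis by simp
next
  case False
  hence v: "0 < v" using assms by simp
  have "(\<lambda>s. sinh s / s) v \<le> (\<lambda>s. sinh s / s) u"
  proof (rule DERIV_nonneg_imp_nondecreasing[OF assms(2)])
    fix x :: real assume "v \<le> x" "x \<le> u"
    hence x0: "0 < x" using v by simp
    have "((\<lambda>s. sinh s / s) has_real_derivative (cosh x * x - sinh x * 1) / (x * x)) (at x)"
      by (rule derivative_eq_intros refl | use x0 in simp)+
    moreover have "0 \<le> (cosh x * x - sinh x * 1) / (x * x)"
      using sinh_le_mult_cosh[of x] x0 by (simp add: algebra_simps)
    ultimately show "\<exists>y. ((\<lambda>s. sinh s / s) has_real_derivative y) (at x) \<and> 0 \<le> y" by blast
  qed
  moreover have "0 < u" using v assms by simp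
  ultimately show ?thesis using v by (simp add: field_simps)
qed

text \<open>Log-convexity of $\sinh$: with $d = a+b$ and $w = |a-b|$, the claim reduces to
  $d^2\sinh^2 w \le w^2 \sinh^2 d$.\<close>

lemma sinh_sum_sq_le:
  fixes a b :: real
  assumes "0 \<le> a" "0 \<le> b"
  shows "4 * a * b * (sinh (a + b))^2 \<le> sinh (2*a) * sinh (2*b) * (a + b)^2"
proof -
  define d where "d = a + b"
  define w where "w = \<bar>a - b\<bar>"
  have w: "0 \<le> w" "w \<le> d" using assms by (auto simp: w_def d_def)
  have "(d * sinh w)^2 \<le> (w * sinh d)^2"
    using sinh_ratio_mono[OF w] w by (intro power_mono) auto
  hence m2: "d^2 * (sinh w)^2 \<le> w^2 * (sinh d)^2" by (simp add: power_mult_distrib)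
  have "cosh (2*w) = cosh (2*(a-b))" by (simp add: w_def abs_if)
  hence e1: "sinh (2*a) * sinh (2*b) = (cosh (2*d) - cosh (2*w)) / 2"
    unfolding d_def by (simp add: cosh_add cosh_diff algebra_simps)
  have e2: "cosh (2*d) = 1 + 2 * (sinh d)^2" "cosh (2*w) = 1 + 2 * (sinh w)^2"
    by (simp_all add: cosh_double cosh_square_eq)
  have e3: "4 * a * b = d^2 - w^2" by (simp add: d_def w_def power2_eq_square abs_if algebra_simps)
  show ?thesis using m2 unfolding d_def[symmetric] e1 e2 e3 by (simp add: algebra_simps)
qed

text \<open>Shifting the argument of $\sinh$ by $c$ costs at most a factor $\cosh c$, in both
  sign regimes of $c$ that occur in the hypotheses (I) and (II).\<close>

lemma sinh_shift_le:
  fixes c d :: real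
  assumes d: "0 < d" and c: "d \<le> c \<or> (c \<le> 0 \<and> 0 \<le> d + c)"
  shows "d^2 * (sinh (d + c))^2 \<le> (d + c)^2 * (sinh d)^2 * (cosh c)^2"
proof -
  have le: "d * sinh (d + c) \<le> (d + c) * sinh d * cosh c"
    using c
  proof
    assume dc: "d \<le> c"
    have "(c + d) * sinh (c - d) \<le> (c - d) * sinh (c + d)"
      using sinh_ratio_mono[of "c - d" "c + d"] dc d by simp
    thus ?thesis unfolding sinh_diff sinh_add by (simp add: algebra_simps)
  next
    assume c0: "c \<le> 0 \<and> 0 \<le> d + c"
    have "d * sinh (d + c) \<le> (d + c) * sinh d"
      using sinh_ratio_mono[of "d + c" d] c0 by simp
    also have "\<dots> \<le> (d + c) * sinh d * cosh c"
      using mult_left_mono[OF cosh_real_ge_1, of "(d + c) * sinh d" c] c0 d by simp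
    finally show ?thesis .
  qed
  have "0 \<le> d * sinh (d + c)" using d c by auto
  hence "(d * sinh (d + c))^2 \<le> ((d + c) * sinh d * cosh c)^2"
    using le by (intro power_mono)
  thus ?thesis by (simp add: power_mult_distrib)
qed

lemma sinh_cosh_main:
  fixes a b c :: real
  assumes a: "0 < a" and b: "0 \<le> b" and c: "a + b \<le> c \<or> (c \<le> 0 \<and> 0 \<le> a + b + c)"
  shows "4 * a * b * (sinh (a + b + c))^2 \<le> sinh (2*a) * sinh (2*b) * (cosh c)^2 * (a + b + c)^2"
proof -
  define d where "d = a + b"
  have d: "0 < d" using a b by (simp add: d_def)
  have "d^2 * (4 * a * b * (sinh (d + c))^2) = 4 * a * b * (d^2 * (sinh (d + c))^2)"
    by (simp add: algebra_simps)
  also have "\<dots> \<le> 4 * a * b * ((d + c)^2 * (sinh d)^2 * (cosh c)^2)"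
    using sinh_shift_le[OF d] c a b by (intro mult_left_mono) (auto simp: d_def add.assoc)
  also have "\<dots> = (4 * a * b * (sinh d)^2) * ((d + c)^2 * (cosh c)^2)" by (simp add: algebra_simps)
  also have "\<dots> \<le> (sinh (2*a) * sinh (2*b) * d^2) * ((d + c)^2 * (cosh c)^2)"
    using sinh_sum_sq_le[of a b] a b by (intro mult_right_mono) (auto simp: d_def)
  also have "\<dots> = d^2 * (sinh (2*a) * sinh (2*b) * (cosh c)^2 * (d + c)^2)" by (simp add: algebra_simps)
  finally show ?thesis using d by (simp add: d_def)
qed

lemma frac_sq_compare:
  fixes x y c :: real
  assumes "c + x \<noteq> 0" "c + y \<noteq> 0" "0 \<le> (x - y) * (c^2 - x*y)"
  shows "y / (c + y)^2 \<le> x / (c + x)^2"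
proof -
  have "x * (c + y)^2 - y * (c + x)^2 = (x - y) * (c^2 - x*y)"
    by (simp add: power2_eq_square algebra_simps)
  hence "y * (c + x)^2 \<le> x * (c + y)^2" using assms(3) by linarith
  thus ?thesis using assms(1,2) by (simp add: field_simps)
qed

lemma frac_sq_min_first:
  fixes m M x c :: real
  assumes m0: "0 \<le> m" and mx: "m \<le> x" and xM: "x \<le> M" and cx: "c + x \<noteq> 0"
  shows "\<exists>e\<in>{m, M}. c + e \<noteq> 0 \<and> e / (c + e)^2 \<le> x / (c + x)^2"
proof (cases "x * m \<le> c^2 \<and> c + m \<noteq> 0")
  case True
  hence "0 \<le> (x - m) * (c^2 - x*m)" using mx by simp
  thus ?thesis using True frac_sq_compare[of c x m] cx by auto
next
  case False
  have x0: "0 \<le> x" using m0 mx by simp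
  have xmM: "x * m \<le> x * M" using x0 mx xM by (intro mult_left_mono) auto
  have cM: "c^2 \<le> x * M"
  proof (cases "c + m = 0")
    case True
    hence "c^2 = m^2" by (metis add_eq_0_iff2 power2_minus)
    moreover have "m^2 \<le> x * m" using m0 mx by (simp add: power2_eq_square mult_right_mono)
    ultimately show ?thesis using xmM by simp
  next
    case False
    thus ?thesis using \<open>\<not> (x * m \<le> c^2 \<and> c + m \<noteq> 0)\<close> xmM by simp
  qed
  have cM0: "c + M \<noteq> 0"
  proof
    assume cM0: "c + M = 0"
    hence "M * M \<le> x * M" using cM by (metis add_eq_0_iff2 power2_eq_square power2_minus)
    moreover have "0 \<le> M" using x0 xM by simp
    ultimately have "x = M" using xM x0 by (metis mult_right_le_imp_le nless_le order_antisym)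
    thus False using cM0 cx by simp
  qed
  have "0 \<le> (x - M) * (c^2 - x*M)" using cM xM by (intro mult_nonpos_nonpos) auto
  thus ?thesis using frac_sq_compare[of c x M] cx cM0 by auto
qed

lemma frac_sq_min_second:
  fixes n N g e :: real
  assumes "n \<le> g" "g \<le> N" "0 \<le> e" "1 + e + g \<noteq> 0"
  shows "\<exists>e'\<in>{n, N}. e / (1 + e + e')^2 \<le> e / (1 + e + g)^2"
proof -
  have "\<exists>e'\<in>{n, N}. (1 + e + g)^2 \<le> (1 + e + e')^2"
  proof (cases "0 \<le> 1 + e + g")
    case True
    hence "(1 + e + g)^2 \<le> (1 + e + N)^2" using assms by (intro power_mono) auto
    thus ?thesis by auto
  next
    case False
    hence "(-(1 + e + g))^2 \<le> (-(1 + e + n))^2" using assms by (intro power_mono) auto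
    hence "(1 + e + g)^2 \<le> (1 + e + n)^2" by (simp only: power2_minus)
    thus ?thesis by auto
  qed
  then obtain e' where "e' \<in> {n, N}" "(1 + e + g)^2 \<le> (1 + e + e')^2" by blast
  moreover have "0 < (1 + e + g)^2" using assms(4) by simp
  ultimately show ?thesis using assms(3) by (intro bexI[of _ e']) (auto intro!: divide_left_mono mult_pos_pos)
qed

text \<open>The constant $\beta$ is the minimum of $x/(1+x+g)^2$ over the rectangle
  $[m,M] \times [n,N]$: it suffices to inspect the four corners.\<close>

lemma beta_corner_bound:
  fixes m M n N x g :: real
  assumes "0 \<le> m" "m \<le> x" "x \<le> M" "n \<le> g" "g \<le> N"
  shows "Min {m / (1 + m + n)^2, m / (1 + m + N)^2, M / (1 + M + n)^2, M / (1 + M + N)^2}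
           * (1 + x + g)^2 \<le> x"
proof (cases "1 + x + g = 0")
  case True thus ?thesis using assms by simp
next
  case False
  let ?S = "{m / (1 + m + n)^2, m / (1 + m + N)^2, M / (1 + M + n)^2, M / (1 + M + N)^2}"
  have "(1 + g) + x \<noteq> 0" using False by (simp add: add_ac)
  then obtain e where e: "e \<in> {m, M}" "(1 + g) + e \<noteq> 0" "e / ((1 + g) + e)^2 \<le> x / ((1 + g) + x)^2"
    using frac_sq_min_first[OF assms(1-3)] by blast
  have "0 \<le> e" "1 + e + g \<noteq> 0" using e(1,2) assms(1,2,3) by (auto simp: add_ac)
  then obtain e' where e': "e' \<in> {n, N}" "e / (1 + e + e')^2 \<le> e / (1 + e + g)^2"
    using frac_sq_min_second[OF assms(4,5)] by blast
  have "Min ?S \<le> e / (1 + e + e')^2" using e(1) e'(1) by (intro Min_le) auto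
  also have "\<dots> \<le> x / (1 + x + g)^2" using e'(2) e(3) by (simp add: add_ac)
  finally show ?thesis using False by (simp add: pos_le_divide_eq)
qed

text \<open>A pair of log-ratios $(\alpha,\gamma)$ is $\beta$-admissible if it satisfies the sign conditions
  of hypothesis (I) or (II) and the constant $\beta$ controls it as in the corner bound.\<close>

definition beta_admissible :: "real \<Rightarrow> real \<Rightarrow> real \<Rightarrow> bool" where
  "beta_admissible \<beta> \<alpha> \<gamma> \<longleftrightarrow> 0 \<le> \<alpha> \<and> (1 + \<alpha> \<le> \<gamma> \<or> (\<gamma> \<le> 0 \<and> 0 \<le> 1 + \<alpha> + \<gamma>)) \<and>
     \<beta> * (1 + \<alpha> + \<gamma>)^2 \<le> \<alpha>"

text \<open>The core inequality without a sign condition on $a$: it is invariant under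
  $(a,b,c) \mapsto (-a,-b,-c)$.\<close>

lemma sinh_cosh_signed:
  fixes a b c :: real
  assumes "a \<noteq> 0" "0 \<le> b / a" "1 + b / a \<le> c / a \<or> (c / a \<le> 0 \<and> 0 \<le> 1 + b / a + c / a)"
  shows "4 * a * b * (sinh (a + b + c))^2 \<le> sinh (2*a) * sinh (2*b) * (cosh c)^2 * (a + b + c)^2"
proof -
  have pos_case: "4 * a * b * (sinh (a + b + c))^2 \<le> sinh (2*a) * sinh (2*b) * (cosh c)^2 * (a + b + c)^2"
    if a: "0 < a" and "0 \<le> b / a" "1 + b / a \<le> c / a \<or> (c / a \<le> 0 \<and> 0 \<le> 1 + b / a + c / a)"
    for a b c :: real
  proof (rule sinh_cosh_main[OF a])
    have e: "1 + b / a = (a + b) / a" "(a + b) / a + c / a = (a + b + c) / a"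
      using a by (simp_all add: field_simps)
    show "0 \<le> b" using that by (simp add: zero_le_divide_iff)
    show "a + b \<le> c \<or> (c \<le> 0 \<and> 0 \<le> a + b + c)"
      using that unfolding e by (auto simp: divide_le_cancel zero_le_divide_iff divide_le_0_iff)
  qed
  show ?thesis
  proof (cases "0 < a")
    case True thus ?thesis using pos_case assms(2,3) by blast
  next
    case False
    hence "0 < - a" using assms(1) by simp
    from pos_case[OF this, of "- b" "- c"] assms(2,3)
    have "4 * a * b * (sinh (- (a + b + c)))^2
        \<le> sinh (- (2*a)) * sinh (- (2*b)) * (cosh (- c))^2 * (- (a + b + c))^2"
      by (simp add: algebra_simps)
    thus ?thesis by (simp only: sinh_minus cosh_minus power2_minus minus_mult_minus)
  qed
qed

text \<open>Dividing out $(a+b+c)^2$ using $\beta (a+b+c)^2 \le ab$.\<close>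

lemma sinh_cosh_beta:
  fixes a b c \<beta> :: real
  assumes a: "a \<noteq> 0" and adm: "beta_admissible \<beta> (b / a) (c / a)"
  shows "4 * \<beta> * (sinh (a + b + c))^2 \<le> sinh (2*a) * sinh (2*b) * (cosh c)^2"
proof -
  have ab: "0 \<le> a * b"
    using adm unfolding beta_admissible_def by (auto simp: zero_le_divide_iff zero_le_mult_iff)
  have sinh_prod: "0 \<le> sinh (2*a) * sinh (2*b)"
    using ab by (auto simp: zero_le_mult_iff)
  have "\<beta> * (1 + b / a + c / a)^2 * a^2 \<le> b / a * a^2"
    using adm unfolding beta_admissible_def by (intro mult_right_mono) auto
  moreover have "(1 + b / a + c / a)^2 * a^2 = (a + b + c)^2" "b / a * a^2 = a * b"
    using a by (simp_all add: field_simps power2_eq_square)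
  ultimately have beta_ab: "\<beta> * (a + b + c)^2 \<le> a * b" by (simp add: mult.assoc)
  show ?thesis
  proof (cases "a + b + c = 0")
    case True thus ?thesis using sinh_prod by simp
  next
    case False
    have "4 * \<beta> * (sinh (a + b + c))^2 * (a + b + c)^2 = 4 * (sinh (a + b + c))^2 * (\<beta> * (a + b + c)^2)"
      by simp
    also have "\<dots> \<le> 4 * (sinh (a + b + c))^2 * (a * b)" using beta_ab by (intro mult_left_mono) auto
    also have "\<dots> \<le> sinh (2*a) * sinh (2*b) * (cosh c)^2 * (a + b + c)^2"
      using sinh_cosh_signed[OF a, of b c] adm unfolding beta_admissible_def by (simp add: mult_ac)
    finally show ?thesis using False by simp
  qed
qed

lemma sinh_ln_eq: "0 < (p::real) \<Longrightarrow> sinh (ln p) = (p^2 - 1) / (2 * p)"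
  by (simp add: sinh_ln_real field_simps power2_eq_square)

lemma cosh_half_ln_sq: "0 < (r::real) \<Longrightarrow> (cosh (ln r / 2))^2 = (r + 1)^2 / (4 * r)"
proof -
  assume r: "0 < r"
  have "cosh (ln r) = 2 * (cosh (ln r / 2))^2 - 1"
    using cosh_double[of "ln r / 2"] cosh_square_eq[of "ln r / 2"] by simp
  moreover have "cosh (ln r) = (r + inverse r) / 2" using cosh_ln_real[OF r] by simp
  ultimately show ?thesis using r by (simp add: field_simps power2_eq_square)
qed

lemma sinh_half_ln_sq: "0 < (t::real) \<Longrightarrow> (sinh (ln t / 2))^2 = (t - 1)^2 / (4 * t)"
proof -
  assume t: "0 < t"
  have "cosh (ln t) = 2 * (sinh (ln t / 2))^2 + 1"
    using cosh_double[of "ln t / 2"] cosh_square_eq[of "ln t / 2"] by simp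
  moreover have "cosh (ln t) = (t + inverse t) / 2" using cosh_ln_real[OF t] by simp
  ultimately show ?thesis using t by (simp add: field_simps power2_eq_square)
qed

text \<open>The pairwise inequality for ratios $p,q,r$; with $a = \ln p/2$, $b = \ln q/2$,
  $c = \ln r/2$ it is the hyperbolic inequality above.\<close>

lemma ratio_poly_bound:
  fixes p q r \<beta> :: real
  assumes pos: "0 < p" "0 < q" "0 < r" and lp: "ln p \<noteq> 0"
    and adm: "beta_admissible \<beta> (ln q / ln p) (ln r / ln p)"
  shows "16 * \<beta> * (p * q * r - 1)^2 \<le> (p^2 - 1) * (q^2 - 1) * (r + 1)^2"
proof -
  define t where "t = p * q * r"
  have t: "0 < t" using pos by (simp add: t_def)
  have sum: "ln p / 2 + ln q / 2 + ln r / 2 = ln t / 2"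
    using pos by (simp add: t_def ln_mult add_divide_distrib)
  have "4 * \<beta> * (sinh (ln t / 2))^2 \<le> sinh (ln p) * sinh (ln q) * (cosh (ln r / 2))^2"
    using sinh_cosh_beta[of "ln p / 2" \<beta> "ln q / 2" "ln r / 2"] lp adm unfolding sum by simp
  hence "4 * \<beta> * ((t - 1)^2 / (4 * t))
      \<le> (p^2 - 1) / (2 * p) * ((q^2 - 1) / (2 * q)) * ((r + 1)^2 / (4 * r))"
    using pos t by (simp add: sinh_ln_eq sinh_half_ln_sq cosh_half_ln_sq)
  hence "(4 * \<beta> * ((t - 1)^2 / (4 * t))) * (16 * t)
      \<le> ((p^2 - 1) / (2 * p) * ((q^2 - 1) / (2 * q)) * ((r + 1)^2 / (4 * r))) * (16 * t)"
    using t by (intro mult_right_mono) auto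
  moreover have "(4 * \<beta> * ((t - 1)^2 / (4 * t))) * (16 * t) = 16 * \<beta> * (t - 1)^2"
    using t by simp
  moreover have "((p^2 - 1) / (2 * p) * ((q^2 - 1) / (2 * q)) * ((r + 1)^2 / (4 * r))) * (16 * t)
      = (p^2 - 1) * (q^2 - 1) * (r + 1)^2"
    using pos by (simp add: t_def)
  ultimately show ?thesis by (simp add: t_def)
qed

text \<open>The pairwise inequality for the values $f(x),f(y),g(x),\dots$: homogenize the
  ratio form.\<close>

lemma pair_bound_scalar:
  fixes fx fy gx gy hx hy \<beta> :: real
  assumes pos: "0 < fx" "0 < fy" "0 < gx" "0 < gy" "0 < hx" "0 < hy"
    and ne: "ln fx \<noteq> ln fy"
    and adm: "beta_admissible \<beta> ((ln gx - ln gy) / (ln fx - ln fy)) ((ln hx - ln hy) / (ln fx - ln fy))"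
  shows "16 * \<beta> * (fx * gx * hx - fy * gy * hy)^2
          \<le> (fx - fy) * (gx - gy) * (fx + fy) * (gx + gy) * (hx + hy)^2"
proof -
  define p where "p = fx / fy"
  define q where "q = gx / gy"
  define r where "r = hx / hy"
  have pqr: "0 < p" "0 < q" "0 < r" using pos by (simp_all add: p_def q_def r_def)
  have "ln p = ln fx - ln fy" "ln q = ln gx - ln gy" "ln r = ln hx - ln hy"
    using pos by (simp_all add: p_def q_def r_def ln_div)
  hence bound: "16 * \<beta> * (p * q * r - 1)^2 \<le> (p^2 - 1) * (q^2 - 1) * (r + 1)^2"
    using ratio_poly_bound[OF pqr] ne adm by simp
  have fx: "fx = p * fy" "gx = q * gy" "hx = r * hy" using pos by (simp_all add: p_def q_def r_def)
  have "16 * \<beta> * (fx * gx * hx - fy * gy * hy)^2 = (fy * gy * hy)^2 * (16 * \<beta> * (p * q * r - 1)^2)"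
    unfolding fx by (simp add: power2_eq_square algebra_simps)
  also have "\<dots> \<le> (fy * gy * hy)^2 * ((p^2 - 1) * (q^2 - 1) * (r + 1)^2)"
    using bound by (rule mult_left_mono) simp
  also have "\<dots> = (fx - fy) * (gx - gy) * (fx + fy) * (gx + gy) * (hx + hy)^2"
    unfolding fx by (simp add: power2_eq_square algebra_simps)
  finally show ?thesis .
qed

section \<open>A mean value theorem for logarithmic derivatives\<close>

text \<open>Cauchy's mean value theorem, assuming continuity only on the closed interval.\<close>

lemma cauchy_mvt_on:
  fixes F G F' G' :: "real \<Rightarrow> real"
  assumes uv: "u < v" and cF: "continuous_on {u..v} F" and cG: "continuous_on {u..v} G"
    and dF: "\<And>z. u < z \<Longrightarrow> z < v \<Longrightarrow> (F has_real_derivative F' z) (at z)"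
    and dG: "\<And>z. u < z \<Longrightarrow> z < v \<Longrightarrow> (G has_real_derivative G' z) (at z)"
  shows "\<exists>z\<in>{u<..<v}. (F v - F u) * G' z = (G v - G u) * F' z"
proof -
  define K where "K t = (F v - F u) * G t - (G v - G u) * F t" for t
  have dK: "(K has_real_derivative (F v - F u) * G' z - (G v - G u) * F' z) (at z)"
    if "u < z" "z < v" for z
    unfolding K_def using that by (auto intro!: derivative_eq_intros dF dG)
  have "continuous_on {u..v} K" unfolding K_def by (intro continuous_intros cF cG)
  then obtain l z where z: "u < z" "z < v" "(K has_real_derivative l) (at z)" "K v - K u = (v - u) * l"
    using MVT[OF uv] dK real_differentiable_def by blast
  have "K v - K u = 0" by (simp add: K_def algebra_simps)
  hence "l = 0" using z(4) uv by simp
  moreover have "l = (F v - F u) * G' z - (G v - G u) * F' z"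
    using DERIV_unique[OF z(3) dK[OF z(1,2)]] .
  ultimately show ?thesis using z(1,2) by auto
qed

lemma ln_comp_has_deriv:
  fixes g :: "real \<Rightarrow> real"
  assumes "g differentiable (at z)" "0 < g z"
  shows "((\<lambda>t. ln (g t)) has_real_derivative deriv (\<lambda>t. ln (g t)) z) (at z)"
proof -
  obtain D where "(g has_real_derivative D) (at z)"
    using assms(1) real_differentiable_def by blast
  hence "((\<lambda>t. ln (g t)) has_real_derivative (1 / g z * D)) (at z)"
    using assms(2) by (auto intro!: derivative_eq_intros)
  thus ?thesis using DERIV_imp_deriv by metis
qed

lemma log_ratio_mvt:
  fixes f g :: "real \<Rightarrow> real"
  assumes uv: "u < v"
    and cont: "continuous_on {u..v} f" "continuous_on {u..v} g"
    and diff: "\<forall>x\<in>{u<..<v}. f differentiable (at x)" "\<forall>x\<in>{u<..<v}. g differentiable (at x)"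
    and pos: "\<forall>x\<in>{u..v}. 0 < f x" "\<forall>x\<in>{u..v}. 0 < g x"
    and F_nz: "\<forall>x\<in>{u<..<v}. deriv (\<lambda>t. ln (f t)) x \<noteq> 0"
    and F_ne: "ln (f v) \<noteq> ln (f u)"
  shows "\<exists>z\<in>{u<..<v}. (ln (g v) - ln (g u)) / (ln (f v) - ln (f u)) = log_deriv_ratio f g z"
proof -
  have cF: "continuous_on {u..v} (\<lambda>t. ln (f t))" and cG: "continuous_on {u..v} (\<lambda>t. ln (g t))"
    using cont pos by (auto intro!: continuous_on_ln)
  have dF: "((\<lambda>t. ln (f t)) has_real_derivative deriv (\<lambda>t. ln (f t)) z) (at z)"
    and dG: "((\<lambda>t. ln (g t)) has_real_derivative deriv (\<lambda>t. ln (g t)) z) (at z)"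
    if "u < z" "z < v" for z
    using that diff pos by (auto intro!: ln_comp_has_deriv)
  obtain z where z: "z \<in> {u<..<v}" and
    eq: "(ln (f v) - ln (f u)) * deriv (\<lambda>t. ln (g t)) z = (ln (g v) - ln (g u)) * deriv (\<lambda>t. ln (f t)) z"
    using cauchy_mvt_on[OF uv cF cG dF dG] by blast
  have "deriv (\<lambda>t. ln (f t)) z \<noteq> 0" using F_nz z by blast
  hence "(ln (g v) - ln (g u)) / (ln (f v) - ln (f u)) = log_deriv_ratio f g z"
    using eq F_ne unfolding log_deriv_ratio_def by (simp add: field_simps)
  thus ?thesis using z by blast
qed

lemma pair_rhs_sym:
  fixes a b c d e k :: real
  shows "(a - b) * (c - d) * (a + b) * (c + d) * (e + k)^2 = (b - a) * (d - c) * (b + a) * (d + c) * (k + e)^2"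
  by algebra

locale cli_triple =
  fixes f g h :: "real \<Rightarrow> real"
  assumes f_cont: "continuous_on {0..1} f" and g_cont: "continuous_on {0..1} g"
      and h_cont: "continuous_on {0..1} h"
    and f_diff: "\<forall>x\<in>{0<..<1}. f differentiable (at x)"
      and g_diff: "\<forall>x\<in>{0<..<1}. g differentiable (at x)"
      and h_diff: "\<forall>x\<in>{0<..<1}. h differentiable (at x)"
    and f_pos: "\<forall>x\<in>{0<..1}. 0 < f x" and g_pos: "\<forall>x\<in>{0<..1}. 0 < g x"
      and h_pos: "\<forall>x\<in>{0<..1}. 0 < h x"
    and F_deriv_nz: "\<forall>x\<in>{0<..<1}. deriv (\<lambda>t. ln (f t)) x \<noteq> 0"
    and F_inj: "inj_on (\<lambda>t. ln (f t)) {0<..1}"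
    and cases:
      "(cli_monotone_pair f g \<and> cli_monotone_pair f h \<and>
          (\<forall>x\<in>{0<..1}. \<forall>y\<in>{0<..1}. x < y \<longrightarrow>
             1 + (ln (g y) - ln (g x)) / (ln (f y) - ln (f x))
               \<le> (ln (h y) - ln (h x)) / (ln (f y) - ln (f x))))
       \<or> (cli_monotone_pair f g \<and> cli_antimonotone_pair f h \<and>
          (\<forall>x\<in>{0<..1}. \<forall>y\<in>{0<..1}. x < y \<longrightarrow>
             1 + (ln (g y) - ln (g x)) / (ln (f y) - ln (f x))
               + (ln (h y) - ln (h x)) / (ln (f y) - ln (f x)) \<ge> 0))"
begin

lemma log_ratio_mvt01:
  fixes k :: "real \<Rightarrow> real"
  assumes uv: "u < v" "u \<in> {0<..1}" "v \<in> {0<..1}"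
    and k: "continuous_on {0..1} k" "\<forall>x\<in>{0<..<1}. k differentiable (at x)" "\<forall>x\<in>{0<..1}. 0 < k x"
  shows "\<exists>z\<in>{0<..<1}. (ln (k v) - ln (k u)) / (ln (f v) - ln (f u)) = log_deriv_ratio f k z"
proof -
  have sub: "{u..v} \<subseteq> {0..1}" "{u<..<v} \<subseteq> {0<..<1}" "{u..v} \<subseteq> {0<..1}" using uv by auto
  have cont: "continuous_on {u..v} f" "continuous_on {u..v} k"
    using continuous_on_subset[OF f_cont sub(1)] continuous_on_subset[OF k(1) sub(1)] .
  have diff: "\<forall>x\<in>{u<..<v}. f differentiable (at x)" "\<forall>x\<in>{u<..<v}. k differentiable (at x)"
    using f_diff k(2) sub(2) by blast+
  have pos: "\<forall>x\<in>{u..v}. 0 < f x" "\<forall>x\<in>{u..v}. 0 < k x" using f_pos k(3) sub(3) by blast+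
  have nz: "\<forall>x\<in>{u<..<v}. deriv (\<lambda>t. ln (f t)) x \<noteq> 0" using F_deriv_nz sub(2) by blast
  have "ln (f v) \<noteq> ln (f u)" using F_inj uv by (auto dest: inj_onD)
  from log_ratio_mvt[OF uv(1) cont diff pos nz this] show ?thesis using sub(2) by blast
qed

text \<open>The log-ratios at two points are $\beta$-admissible: the mean value theorem places them
  in $[m,M]$ and $[n,N]$, and the hypotheses (I) / (II) supply the sign conditions.\<close>

lemma admissible_log_ratios:
  assumes uv: "u < v" "u \<in> {0<..1}" "v \<in> {0<..1}"
  shows "beta_admissible (beta_const f g h)
           ((ln (g v) - ln (g u)) / (ln (f v) - ln (f u))) ((ln (h v) - ln (h u)) / (ln (f v) - ln (f u)))"
proof -
  define \<alpha> where "\<alpha> = (ln (g v) - ln (g u)) / (ln (f v) - ln (f u))"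
  define \<gamma> where "\<gamma> = (ln (h v) - ln (h u)) / (ln (f v) - ln (f u))"
  define m where "m = Inf (log_deriv_ratio f g ` {0<..<1})"
  define M where "M = Sup (log_deriv_ratio f g ` {0<..<1})"
  define n where "n = Inf (log_deriv_ratio f h ` {0<..<1})"
  define N where "N = Sup (log_deriv_ratio f h ` {0<..<1})"
  obtain z1 where z1: "z1 \<in> {0<..<1}" "\<alpha> = log_deriv_ratio f g z1"
    using log_ratio_mvt01[OF uv g_cont g_diff g_pos] unfolding \<alpha>_def by blast
  obtain z2 where z2: "z2 \<in> {0<..<1}" "\<gamma> = log_deriv_ratio f h z2"
    using log_ratio_mvt01[OF uv h_cont h_diff h_pos] unfolding \<gamma>_def by blast
  have fg: "cli_monotone_pair f g" using cases by blast
  have bdd_h: "bdd_below (log_deriv_ratio f h ` {0<..<1})" "bdd_above (log_deriv_ratio f h ` {0<..<1})"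
    using cases unfolding cli_monotone_pair_def cli_antimonotone_pair_def by auto
  have m0: "0 \<le> m" using fg unfolding cli_monotone_pair_def m_def by blast
  have \<alpha>_range: "m \<le> \<alpha>" "\<alpha> \<le> M" unfolding m_def M_def z1(2)
    using fg z1(1) unfolding cli_monotone_pair_def by (auto intro!: cInf_lower cSup_upper)
  have \<gamma>_range: "n \<le> \<gamma>" "\<gamma> \<le> N" unfolding n_def N_def z2(2)
    using bdd_h z2(1) by (auto intro!: cInf_lower cSup_upper)
  have beta: "beta_const f g h * (1 + \<alpha> + \<gamma>)^2 \<le> \<alpha>"
    unfolding beta_const_def Let_def m_def[symmetric] M_def[symmetric] n_def[symmetric] N_def[symmetric]
    by (rule beta_corner_bound[OF m0 \<alpha>_range \<gamma>_range])
  have "1 + \<alpha> \<le> \<gamma> \<or> (\<gamma> \<le> 0 \<and> 0 \<le> 1 + \<alpha> + \<gamma>)"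
    using cases
  proof (elim disjE conjE)
    assume "\<forall>x\<in>{0<..1}. \<forall>y\<in>{0<..1}. x < y \<longrightarrow>
             1 + (ln (g y) - ln (g x)) / (ln (f y) - ln (f x))
               \<le> (ln (h y) - ln (h x)) / (ln (f y) - ln (f x))"
    thus ?thesis using uv unfolding \<alpha>_def \<gamma>_def by blast
  next
    assume anti: "cli_antimonotone_pair f h"
      and "\<forall>x\<in>{0<..1}. \<forall>y\<in>{0<..1}. x < y \<longrightarrow>
             1 + (ln (g y) - ln (g x)) / (ln (f y) - ln (f x))
               + (ln (h y) - ln (h x)) / (ln (f y) - ln (f x)) \<ge> 0"
    hence "0 \<le> 1 + \<alpha> + \<gamma>" using uv unfolding \<alpha>_def \<gamma>_def by blast
    moreover have "N \<le> 0" using anti unfolding cli_antimonotone_pair_def N_def by blast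
    ultimately show ?thesis using \<gamma>_range by auto
  qed
  thus ?thesis using m0 \<alpha>_range beta unfolding beta_admissible_def \<alpha>_def \<gamma>_def by auto
qed

lemma pair_bound:
  assumes "x \<in> {0<..1}" "y \<in> {0<..1}"
  shows "16 * beta_const f g h * (f x * g x * h x - f y * g y * h y)^2
           \<le> (f x - f y) * (g x - g y) * (f x + f y) * (g x + g y) * (h x + h y)^2"
  using assms
proof (induction x y rule: linorder_wlog)
  case (le u v)
  show ?case
  proof (cases "u = v")
    case False
    hence uv: "u < v" using le by simp
    have "ln (f v) \<noteq> ln (f u)" using F_inj uv le by (auto dest: inj_onD)
    hence "16 * beta_const f g h * (f v * g v * h v - f u * g u * h u)^2
           \<le> (f v - f u) * (g v - g u) * (f v + f u) * (g v + g u) * (h v + h u)^2"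
      using le f_pos g_pos h_pos admissible_log_ratios[OF uv le(2,3)]
      by (intro pair_bound_scalar) auto
    thus ?thesis by (simp only: pair_rhs_sym power2_commute)
  qed simp
next
  case (sym u v)
  thus ?case by (simp only: pair_rhs_sym power2_commute)
qed

end

definition cinner :: "complex^'n \<Rightarrow> complex^'n \<Rightarrow> complex" where
  "cinner x y = (\<Sum>i\<in>UNIV. cnj (x$i) * y$i)"

lemma scaleR_vec_component: "(c *\<^sub>R (y::complex^'n)) $ i = complex_of_real c * y $ i"
  using vector_scaleR_component[of c y i] scaleR_conv_of_real[of c "y $ i"] by simp

lemma inner_cinner: "inner x y = Re (cinner x y)"
  unfolding inner_vec_def cinner_def inner_complex_def by simp

lemma cinner_add_right: "cinner x (y + z) = cinner x y + cinner x z"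
  unfolding cinner_def by (simp add: distrib_left sum.distrib)

lemma cinner_diff_right: "cinner x (y - z) = cinner x y - cinner x z"
  unfolding cinner_def by (simp add: right_diff_distrib sum_subtractf)

lemma cinner_scale_right: "cinner x (c *s y) = c * cinner x y"
  unfolding cinner_def by (simp add: sum_distrib_left mult_ac)

lemma cinner_scaleR_right: "cinner x (c *\<^sub>R y) = of_real c * cinner x y"
  unfolding cinner_def by (simp add: sum_distrib_left mult_ac scaleR_vec_component del: vector_scaleR_component)

lemma cinner_scale_left: "cinner (c *s x) y = cnj c * cinner x y"
  unfolding cinner_def by (simp add: sum_distrib_left mult_ac)

lemma cinner_sum_right: "cinner x (sum f S) = (\<Sum>j\<in>S. cinner x (f j))"
  unfolding cinner_def by (simp add: sum_distrib_left sum_component, rule sum.swap)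

lemma cinner_cnj: "cnj (cinner x y) = cinner y x"
  unfolding cinner_def by (simp add: mult.commute)

lemma cinner_self: "cinner x x = of_real ((norm x)^2)"
proof -
  have "(norm x)^2 = (\<Sum>i\<in>UNIV. (norm (x$i))^2)"
    unfolding norm_vec_def L2_set_def by (simp add: sum_nonneg)
  thus ?thesis unfolding cinner_def by (simp add: complex_norm_square[symmetric] mult.commute)
qed

lemma cmatrix_vector_mult_scaleR: "A *v (c *\<^sub>R x) = c *\<^sub>R (A *v (x :: complex^'n))"
  unfolding matrix_vector_mult_def
  by (simp add: vec_eq_iff scaleR_vec_component sum_distrib_left mult_ac del: vector_scaleR_component)

lemma hermitian_entry: "cmat_hermitian A \<Longrightarrow> A $ i $ j = cnj (A $ j $ i)"
  unfolding cmat_hermitian_def cmat_adjoint_def by (metis vec_lambda_beta)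

lemma cinner_hermitian:
  assumes "cmat_hermitian A"
  shows "cinner x (A *v y) = cinner (A *v x) y"
proof -
  have "cinner x (A *v y) = (\<Sum>i\<in>UNIV. \<Sum>j\<in>UNIV. cnj (x$i) * A$i$j * y$j)"
    unfolding cinner_def matrix_vector_mult_def by (simp add: sum_distrib_left mult.assoc)
  also have "\<dots> = (\<Sum>j\<in>UNIV. \<Sum>i\<in>UNIV. cnj (x$i) * A$i$j * y$j)" by (rule sum.swap)
  also have "\<dots> = (\<Sum>j\<in>UNIV. \<Sum>i\<in>UNIV. cnj (A$j$i * x$i) * y$j)"
  proof (intro sum.cong refl)
    fix i j
    show "cnj (x$i) * A$i$j * y$j = cnj (A$j$i * x$i) * y$j"
      by (simp add: hermitian_entry[OF assms, of i j])
  qed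
  also have "\<dots> = cinner (A *v x) y"
    unfolding cinner_def matrix_vector_mult_def by (simp add: sum_distrib_right)
  finally show ?thesis .
qed

text \<open>An orthonormal family that is not a basis leaves a nonzero orthogonal vector
  (Gram--Schmidt step).\<close>

lemma orthonormal_not_spanning:
  fixes e :: "'n::finite \<Rightarrow> complex^'n"
  assumes on: "\<forall>j\<in>S. \<forall>k\<in>S. cinner (e j) (e k) = (if j = k then 1 else 0)" and S: "S \<noteq> UNIV"
  shows "\<exists>w. w \<noteq> 0 \<and> (\<forall>j\<in>S. cinner (e j) w = 0)"
proof -
  have "vec.span (e ` S) \<noteq> UNIV"
  proof
    assume span: "vec.span (e ` S) = UNIV"
    have "vec.dim (UNIV :: (complex^'n) set) \<le> card (e ` S)"
      by (rule vec.dim_le_card) (use span in auto)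
    also have "\<dots> \<le> card S" by (rule card_image_le) simp
    also have "\<dots> < CARD('n)" using S by (intro psubset_card_mono) auto
    finally show False by (simp add: card_cart_basis)
  qed
  then obtain z where z: "z \<notin> vec.span (e ` S)" by blast
  define w where "w = z - (\<Sum>j\<in>S. cinner (e j) z *s e j)"
  have "cinner (e k) w = 0" if k: "k \<in> S" for k
  proof -
    have "(\<Sum>j\<in>S. cinner (e j) z * cinner (e k) (e j)) = (\<Sum>j\<in>S. if k = j then cinner (e j) z else 0)"
      using on k by (intro sum.cong refl) auto
    thus ?thesis unfolding w_def using k
      by (simp add: cinner_diff_right cinner_sum_right cinner_scale_right)
  qed
  moreover have "w \<noteq> 0"
  proof
    assume "w = 0"
    hence "z = (\<Sum>j\<in>S. cinner (e j) z *s e j)" unfolding w_def by simp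
    moreover have "(\<Sum>j\<in>S. cinner (e j) z *s e j) \<in> vec.span (e ` S)"
      by (intro vec.span_sum vec.span_scale vec.span_base) auto
    ultimately show False using z by simp
  qed
  ultimately show ?thesis by blast
qed

lemma inner_hermitian:
  assumes "cmat_hermitian A"
  shows "inner x (A *v y) = inner (A *v x) (y :: complex^'n)"
  unfolding inner_cinner cinner_hermitian[OF assms] ..

lemma rayleigh_bound_from_sphere:
  fixes A :: "complex^'n^'n"
  assumes W_scaleR: "\<And>v c. v \<in> W \<Longrightarrow> c *\<^sub>R v \<in> W"
    and max: "\<And>y. y \<in> W \<Longrightarrow> norm y = 1 \<Longrightarrow> inner y (A *v y) \<le> lm"
    and v: "v \<in> W"
  shows "inner v (A *v v) \<le> lm * inner v v"
proof (cases "v = 0")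
  case True thus ?thesis by simp
next
  case False
  define c where "c = 1 / norm v"
  have "norm (c *\<^sub>R v) = 1" using False by (simp add: c_def)
  hence "inner (c *\<^sub>R v) (A *v (c *\<^sub>R v)) \<le> lm" by (rule max[OF W_scaleR[OF v]])
  hence "c^2 * inner v (A *v v) \<le> lm"
    by (simp add: cmatrix_vector_mult_scaleR power2_eq_square)
  hence "c^2 * inner v (A *v v) * (norm v)^2 \<le> lm * (norm v)^2" by (simp add: mult_right_mono)
  moreover have "c^2 * (norm v)^2 = 1" using False by (simp add: c_def power2_eq_square)
  ultimately show ?thesis by (simp add: power2_norm_eq_inner[symmetric] mult_ac)
qed

text \<open>Perturbing $x$ in the direction of the residual
  $y = Ax - \lambda x$ would increase the quotient unless $y = 0$.\<close>

lemma hermitian_constrained_max_eigvec: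
  fixes A :: "complex^'n^'n"
  assumes herm: "cmat_hermitian A"
    and W_add: "\<And>v w. v \<in> W \<Longrightarrow> w \<in> W \<Longrightarrow> v + w \<in> W"
    and W_scaleR: "\<And>v c. v \<in> W \<Longrightarrow> c *\<^sub>R v \<in> W"
    and W_inv: "\<And>v. v \<in> W \<Longrightarrow> A *v v \<in> W"
    and x: "x \<in> W" "norm x = 1"
    and ray: "\<And>v. v \<in> W \<Longrightarrow> inner v (A *v v) \<le> inner x (A *v x) * inner v v"
  shows "A *v x = complex_of_real (inner x (A *v x)) *s x"
proof -
  define lm where "lm = inner x (A *v x)"
  define y where "y = A *v x - lm *\<^sub>R x"
  define \<phi> where "\<phi> v = inner v (A *v v) - lm * inner v v" for v
  have yW: "y \<in> W" unfolding y_def using W_add[OF W_inv[OF x(1)] W_scaleR[OF x(1), of "-lm"]] by simp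
  have \<phi>_le: "\<phi> v \<le> 0" if "v \<in> W" for v using ray[OF that] unfolding \<phi>_def lm_def by simp
  have \<phi>x: "\<phi> x = 0" using x(2) unfolding \<phi>_def lm_def by (simp add: power2_norm_eq_inner[symmetric])
  have expand: "\<phi> (x + t *\<^sub>R y) = 2 * t * inner y y + t^2 * \<phi> y" for t
  proof -
    have s: "inner x (A *v y) = inner y (A *v x)"
      using inner_hermitian[OF herm, of x y] by (simp add: inner_commute)
    have "\<phi> (x + t *\<^sub>R y) = \<phi> x + 2 * t * (inner y (A *v x) - lm * inner x y) + t^2 * \<phi> y"
      unfolding \<phi>_def using s
      by (simp add: matrix_vector_right_distrib cmatrix_vector_mult_scaleR inner_add_left inner_add_right
          power2_eq_square inner_commute algebra_simps)
    also have "inner y (A *v x) - lm * inner x y = inner y y"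
      unfolding y_def by (simp add: inner_diff_left inner_diff_right inner_commute algebra_simps)
    finally show ?thesis using \<phi>x by simp
  qed
  have "y = 0"
  proof (rule ccontr)
    assume "y \<noteq> 0"
    hence s: "0 < inner y y" by simp
    define t where "t = inner y y / (\<bar>\<phi> y\<bar> + 1)"
    have t0: "0 < t" using s by (simp add: t_def)
    have "2 * t * inner y y + t^2 * \<phi> y \<le> 0"
      using \<phi>_le[OF W_add[OF x(1) W_scaleR[OF yW]]] expand by simp
    moreover have "t * (\<bar>\<phi> y\<bar> + 1) = inner y y" by (simp add: t_def)
    hence "t^2 * \<bar>\<phi> y\<bar> \<le> t * inner y y" using t0 by (simp add: power2_eq_square algebra_simps)
    moreover have "- (t^2 * \<bar>\<phi> y\<bar>) \<le> t^2 * \<phi> y" by (simp add: abs_if)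
    moreover have "0 < t * inner y y" using t0 s by simp
    ultimately show False by linarith
  qed
  thus ?thesis unfolding y_def lm_def
    by (simp add: vec_eq_iff scaleR_vec_component del: vector_scaleR_component)
qed

text \<open>A Hermitian matrix has a unit eigenvector orthogonal to a given orthonormal family of
  eigenvectors: maximize the quadratic form on the compact unit sphere of the orthogonal
  complement, which is invariant.\<close>

lemma hermitian_eigvec_orthogonal:
  fixes A :: "complex^'n^'n" and e :: "'n \<Rightarrow> complex^'n" and S :: "'n set"
  assumes herm: "cmat_hermitian A"
    and on: "\<forall>j\<in>S. \<forall>k\<in>S. cinner (e j) (e k) = (if j = k then 1 else 0)"
    and eig: "\<forall>j\<in>S. A *v e j = complex_of_real (lam j) *s e j"
    and S: "S \<noteq> UNIV"
  shows "\<exists>w \<mu>. cinner w w = 1 \<and> (\<forall>j\<in>S. cinner (e j) w = 0) \<and> A *v w = complex_of_real \<mu> *s w"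
proof -
  define W where "W = {v. \<forall>j\<in>S. cinner (e j) v = 0}"
  have W_add: "\<And>v w. v \<in> W \<Longrightarrow> w \<in> W \<Longrightarrow> v + w \<in> W"
    unfolding W_def by (simp add: cinner_add_right)
  have W_scaleR: "\<And>v c. v \<in> W \<Longrightarrow> c *\<^sub>R v \<in> W"
    unfolding W_def by (simp add: cinner_scaleR_right)
  have W_inv: "A *v v \<in> W" if v: "v \<in> W" for v
  proof -
    have "cinner (e j) (A *v v) = 0" if j: "j \<in> S" for j
      using cinner_hermitian[OF herm, of "e j" v] eig j v unfolding W_def by (simp add: cinner_scale_left)
    thus ?thesis unfolding W_def by blast
  qed
  define K where "K = W \<inter> sphere 0 1"
  obtain w0 where w0: "w0 \<noteq> 0" "w0 \<in> W" using orthonormal_not_spanning[OF on S] unfolding W_def by blast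
  have "(1 / norm w0) *\<^sub>R w0 \<in> K" unfolding K_def using W_scaleR[OF w0(2)] w0(1) by auto
  hence K_ne: "K \<noteq> {}" by blast
  have "W = (\<Inter>j\<in>S. {v. cinner (e j) v = 0})" unfolding W_def by auto
  moreover have "closed {v. cinner (e j) v = 0}" for j
    unfolding cinner_def by (intro closed_Collect_eq continuous_intros)
  ultimately have "closed W" by auto
  hence "compact K" unfolding K_def by (intro closed_Int_compact compact_sphere)
  moreover have "continuous_on K (\<lambda>v. inner v (A *v v))" by (intro continuous_intros)
  ultimately obtain x where x: "x \<in> K" and xmax: "\<And>y. y \<in> K \<Longrightarrow> inner y (A *v y) \<le> inner x (A *v x)"
    using continuous_attains_sup[OF _ K_ne] by blast
  have xW: "x \<in> W" "norm x = 1" using x unfolding K_def by auto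
  have "A *v x = complex_of_real (inner x (A *v x)) *s x"
  proof (rule hermitian_constrained_max_eigvec[OF herm W_add W_scaleR W_inv xW])
    fix v assume v: "v \<in> W"
    show "inner v (A *v v) \<le> inner x (A *v x) * inner v v"
      by (rule rayleigh_bound_from_sphere[where W = W, OF W_scaleR _ v]) (use xmax in \<open>auto simp: K_def\<close>)
  qed
  moreover have "cinner x x = 1" using xW by (simp add: cinner_self)
  ultimately show ?thesis using xW unfolding W_def by blast
qed

section \<open>The spectral theorem\<close>

lemma orthonormal_eigvecs:
  fixes A :: "complex^'n^'n" and S :: "'n set"
  assumes herm: "cmat_hermitian A" and fin: "finite S"
  shows "\<exists>e lam. (\<forall>j\<in>S. \<forall>k\<in>S. cinner (e j) (e k) = (if j = k then 1 else 0)) \<and>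
                 (\<forall>j\<in>S. A *v e j = complex_of_real (lam j) *s e j)"
  using fin
proof (induction S rule: finite_induct)
  case empty thus ?case by auto
next
  case (insert a S)
  then obtain e lam where on: "\<forall>j\<in>S. \<forall>k\<in>S. cinner (e j) (e k) = (if j = k then 1 else 0)"
    and eig: "\<forall>j\<in>S. A *v e j = complex_of_real (lam j) *s e j" by blast
  have "S \<noteq> UNIV" using insert(2) by auto
  from hermitian_eigvec_orthogonal[OF herm on eig this] obtain w \<mu> where
    w: "cinner w w = 1" "\<forall>j\<in>S. cinner (e j) w = 0" "A *v w = complex_of_real \<mu> *s w" by blast
  have w': "\<forall>j\<in>S. cinner w (e j) = 0" using w(2) cinner_cnj by (metis complex_cnj_zero)
  have "\<forall>j\<in>insert a S. \<forall>k\<in>insert a S. cinner ((e(a := w)) j) ((e(a := w)) k) = (if j = k then 1 else 0)"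
    using on w(1,2) w' insert(2) by auto
  moreover have "\<forall>j\<in>insert a S. A *v (e(a := w)) j = complex_of_real ((lam(a := \<mu>)) j) *s (e(a := w)) j"
    using eig w(3) by auto
  ultimately show ?case by blast
qed

lemma hermitian_spectral:
  fixes A :: "complex^'n^'n"
  assumes herm: "cmat_hermitian A"
  shows "\<exists>U d. cmat_unitary U \<and> (\<forall>i. d i \<in> \<real>) \<and> A = U ** cmat_diag d ** cmat_adjoint U"
proof -
  obtain e :: "'n \<Rightarrow> complex^'n" and lam
    where on: "\<forall>j k. cinner (e j) (e k) = (if j = k then 1 else 0)"
      and eig: "\<forall>j. A *v e j = complex_of_real (lam j) *s e j"
    using orthonormal_eigvecs[OF herm finite_class.finite_UNIV] by blast
  define U :: "complex^'n^'n" where "U = (\<chi> i j. e j $ i)"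
  define d where "d i = complex_of_real (lam i)" for i
  have "(cmat_adjoint U ** U) $ j $ k = cinner (e j) (e k)" for j k
    unfolding U_def cmat_adjoint_def cinner_def matrix_matrix_mult_def by simp
  hence UU: "cmat_adjoint U ** U = mat 1" using on by (simp add: vec_eq_iff mat_def)
  hence UU': "U ** cmat_adjoint U = mat 1" using matrix_left_right_inverse by blast
  have "(A ** U) $ i $ j = (A *v e j) $ i" for i j
    unfolding U_def matrix_matrix_mult_def matrix_vector_mult_def by simp
  moreover have "(U ** cmat_diag d) $ i $ j = e j $ i * d j" for i j
    unfolding U_def cmat_diag_def matrix_matrix_mult_def by (simp add: if_distrib cong: if_cong)
  ultimately have AU: "A ** U = U ** cmat_diag d" using eig by (simp add: vec_eq_iff d_def mult.commute)
  have "A = A ** (U ** cmat_adjoint U)" using UU' by simp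
  also have "\<dots> = U ** cmat_diag d ** cmat_adjoint U" by (simp add: matrix_mul_assoc AU)
  finally have "A = U ** cmat_diag d ** cmat_adjoint U" .
  moreover have "cmat_unitary U" using UU UU' by (simp add: cmat_unitary_def)
  moreover have "\<forall>i. d i \<in> \<real>" by (simp add: d_def)
  ultimately show ?thesis by blast
qed

lemma matrix_mult_entry: "(X ** Y) $ i $ j = (\<Sum>k\<in>UNIV. X $ i $ k * Y $ k $ j)"
  by (simp add: matrix_matrix_mult_def)

lemma mat_entry: "mat c $ i $ j = (if i = j then c else 0)"
  by (simp add: mat_def)

lemma diag_entry: "cmat_diag a $ i $ j = (if i = j then a i else 0)"
  by (simp add: cmat_diag_def)

lemma adjoint_entry: "cmat_adjoint X $ i $ j = cnj (X $ j $ i)"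
  by (simp add: cmat_adjoint_def)

lemma diag_mult_entry: "(cmat_diag a ** (X::complex^'n^'n)) $ i $ j = a i * X $ i $ j"
  by (simp add: matrix_matrix_mult_def diag_entry if_distrib if_distribR cong: if_cong)

lemma mult_diag_entry: "((X::complex^'n^'n) ** cmat_diag a) $ i $ j = X $ i $ j * a j"
  by (simp add: matrix_matrix_mult_def diag_entry if_distrib if_distribR cong: if_cong)

lemma mat_mult_entry: "(mat c ** (X::complex^'n^'n)) $ i $ j = c * X $ i $ j"
  by (simp add: matrix_matrix_mult_def mat_entry if_distrib if_distribR cong: if_cong)

lemma mat_mult_comm: "mat c ** (X::complex^'n^'n) = X ** mat c"
proof -
  have e: "mat c = cmat_diag (\<lambda>_. c)" by (simp add: vec_eq_iff mat_entry diag_entry)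
  show ?thesis unfolding e by (simp add: vec_eq_iff diag_mult_entry mult_diag_entry mult.commute)
qed

lemma matrix_sub_ldistrib: "(X::complex^'n^'n) ** (Y - Z) = X ** Y - X ** Z"
  by (simp add: vec_eq_iff matrix_matrix_mult_def right_diff_distrib sum_subtractf)

lemma matrix_sub_rdistrib: "((X::complex^'n^'n) - Y) ** Z = X ** Z - Y ** Z"
  by (simp add: vec_eq_iff matrix_matrix_mult_def left_diff_distrib sum_subtractf)

lemma matrix_add_rdistrib: "((X::complex^'n^'n) + Y) ** Z = X ** Z + Y ** Z"
  by (simp add: vec_eq_iff matrix_matrix_mult_def distrib_right sum.distrib)

lemma adjoint_mult: "cmat_adjoint ((X::complex^'n^'n) ** Y) = cmat_adjoint Y ** cmat_adjoint X"
  by (simp add: vec_eq_iff matrix_matrix_mult_def adjoint_entry mult.commute)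

lemma cmat_trace_mult_comm: "cmat_trace ((X::complex^'n^'n) ** Y) = cmat_trace (Y ** X)"
  using trace_mul_sym[of X Y] by (simp add: cmat_trace_def trace_def)

lemma unitary_cancel:
  assumes "cmat_unitary U"
  shows "cmat_adjoint U ** U = mat 1" "U ** cmat_adjoint U = mat 1"
    "X ** cmat_adjoint U ** U = X" "X ** U ** cmat_adjoint U = X"
  using assms by (simp_all add: cmat_unitary_def matrix_mul_assoc[symmetric])

text \<open>The functional calculus is independent of the chosen diagonalization: if
  $U D U^* = V E V^*$, then $W = V^*U$ intertwines $D$ and $E$ and hence $f(D)$ and $f(E)$.\<close>

lemma mat_fun_unitary_invariant:
  fixes U V :: "complex^'n^'n"
  assumes U: "cmat_unitary U" and V: "cmat_unitary V"
    and eq: "U ** cmat_diag d ** cmat_adjoint U = V ** cmat_diag e ** cmat_adjoint V"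
  shows "U ** cmat_diag (\<lambda>i. complex_of_real (f (Re (d i)))) ** cmat_adjoint U
       = V ** cmat_diag (\<lambda>i. complex_of_real (f (Re (e i)))) ** cmat_adjoint V"
proof -
  define W where "W = cmat_adjoint V ** U"
  have "cmat_adjoint V ** (U ** cmat_diag d ** cmat_adjoint U) ** U
      = cmat_adjoint V ** (V ** cmat_diag e ** cmat_adjoint V) ** U" using eq by simp
  hence WD: "W ** cmat_diag d = cmat_diag e ** W"
    unfolding W_def by (simp add: matrix_mul_assoc unitary_cancel[OF U] unitary_cancel[OF V])
  define fd where "fd = cmat_diag (\<lambda>i. complex_of_real (f (Re (d i))))"
  define fe where "fe = cmat_diag (\<lambda>i. complex_of_real (f (Re (e i))))"
  have "W $ i $ j * complex_of_real (f (Re (d j))) = complex_of_real (f (Re (e i))) * W $ i $ j" for i j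
  proof (cases "W $ i $ j = 0")
    case False
    have "W $ i $ j * d j = e i * W $ i $ j"
      using arg_cong[OF WD, of "\<lambda>M. M $ i $ j"] by (simp add: diag_mult_entry mult_diag_entry)
    hence "d j = e i" using False by (simp add: mult.commute)
    thus ?thesis by (simp add: mult.commute)
  qed simp
  hence Wf: "W ** fd = fe ** W" unfolding fd_def fe_def by (simp add: vec_eq_iff diag_mult_entry mult_diag_entry)
  have "U ** fd ** cmat_adjoint U = V ** (W ** fd) ** cmat_adjoint U"
    unfolding W_def by (simp add: matrix_mul_assoc unitary_cancel[OF V])
  also have "\<dots> = V ** fe ** (W ** cmat_adjoint U)" unfolding Wf by (simp add: matrix_mul_assoc)
  also have "W ** cmat_adjoint U = cmat_adjoint V" unfolding W_def by (simp add: unitary_cancel[OF U])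
  finally show ?thesis unfolding fd_def fe_def .
qed

lemma mat_fun_eq:
  fixes U :: "complex^'n^'n"
  assumes U: "cmat_unitary U" and d: "\<forall>i. d i \<in> \<real>" and A: "A = U ** cmat_diag d ** cmat_adjoint U"
  shows "mat_fun f A = U ** cmat_diag (\<lambda>i. complex_of_real (f (Re (d i)))) ** cmat_adjoint U"
proof -
  let ?P = "\<lambda>B. \<exists>U d. cmat_unitary U \<and> (\<forall>i. d i \<in> \<real>) \<and>
      A = U ** cmat_diag d ** cmat_adjoint U \<and>
      B = U ** cmat_diag (\<lambda>i. complex_of_real (f (Re (d i)))) ** cmat_adjoint U"
  have "?P (mat_fun f A)" unfolding mat_fun_def by (rule someI[of ?P]) (use U d A in blast)
  then obtain V e where V: "cmat_unitary V" "A = V ** cmat_diag e ** cmat_adjoint V"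
    and B: "mat_fun f A = V ** cmat_diag (\<lambda>i. complex_of_real (f (Re (e i)))) ** cmat_adjoint V" by blast
  show ?thesis unfolding B by (rule mat_fun_unitary_invariant[OF V(1) U]) (use V(2) A in simp)
qed

locale unitary_conj =
  fixes U :: "complex^'n^'n"
  assumes unitary: "cmat_unitary U"
begin

definition cj :: "complex^'n^'n \<Rightarrow> complex^'n^'n" where
  "cj X = U ** X ** cmat_adjoint U"

lemma cj_mult: "cj X ** cj Y = cj (X ** Y)"
  unfolding cj_def by (simp add: matrix_mul_assoc unitary_cancel[OF unitary])

lemma cj_mat: "cj (mat c) = mat c"
proof -
  have "cj (mat c) = mat c ** (U ** cmat_adjoint U)"
    unfolding cj_def by (simp add: mat_mult_comm matrix_mul_assoc)
  thus ?thesis by (simp add: unitary_cancel[OF unitary])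
qed

lemma cj_mat_mult: "mat c ** cj X = cj (mat c ** X)"
  using cj_mult[of "mat c" X] by (simp add: cj_mat)

lemma cj_adjoint_conj: "cj (cmat_adjoint U ** Y ** U) = Y"
  unfolding cj_def by (simp add: matrix_mul_assoc unitary_cancel[OF unitary])

lemma trace_cj: "cmat_trace (cj X) = cmat_trace X"
proof -
  have "cmat_trace (cj X) = cmat_trace (U ** (X ** cmat_adjoint U))"
    unfolding cj_def by (simp add: matrix_mul_assoc)
  also have "\<dots> = cmat_trace ((X ** cmat_adjoint U) ** U)" by (rule cmat_trace_mult_comm)
  also have "\<dots> = cmat_trace (X ** (cmat_adjoint U ** U))" by (simp only: matrix_mul_assoc)
  finally show ?thesis by (simp add: unitary_cancel[OF unitary])
qed

lemma cj_commutator: "commutator (cj X) (cj Y) = cj (commutator X Y)"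
  unfolding commutator_def cj_def by (simp add: cj_mult[unfolded cj_def] matrix_sub_ldistrib matrix_sub_rdistrib)

lemma cj_anticommutator: "anticommutator (cj X) (cj Y) = cj (anticommutator X Y)"
  unfolding anticommutator_def cj_def
  by (simp add: cj_mult[unfolded cj_def] matrix_add_ldistrib matrix_add_rdistrib)

end

text \<open>The eigenvalues of a strictly positive density matrix lie in $(0,1]$: they are positive
  and sum to one.\<close>

lemma density_eigenvalues:
  fixes \<rho> U :: "complex^'n^'n"
  assumes rho: "density_pos \<rho>" and U: "cmat_unitary U" and dec: "\<rho> = U ** cmat_diag d ** cmat_adjoint U"
  shows "Re (d i) \<in> {0<..1}"
proof -
  have RU: "\<rho> ** U = U ** cmat_diag d" unfolding dec by (simp add: unitary_cancel[OF U])
  have pos: "0 < Re (d j)" for j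
  proof -
    define v :: "complex^'n" where "v = (\<chi> k. U $ k $ j)"
    have "(\<rho> *v v) $ k = (\<rho> ** U) $ k $ j" for k
      by (simp add: v_def matrix_vector_mult_def matrix_matrix_mult_def)
    hence rv: "\<rho> *v v = (\<chi> k. U $ k $ j * d j)" unfolding RU by (simp add: vec_eq_iff mult_diag_entry)
    have "(cmat_adjoint U ** U) $ j $ j = 1" by (simp add: unitary_cancel[OF U] mat_entry)
    hence one: "(\<Sum>k\<in>UNIV. cnj (U $ k $ j) * U $ k $ j) = 1"
      by (simp add: matrix_matrix_mult_def adjoint_entry)
    have "v \<noteq> 0"
    proof
      assume "v = 0"
      hence "\<And>k. U $ k $ j = 0" by (simp add: v_def vec_eq_iff)
      thus False using one by simp
    qed
    hence "0 < Re (\<Sum>k\<in>UNIV. cnj (v $ k) * (\<rho> *v v) $ k)"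
      using rho unfolding density_pos_def cmat_posdef_def by blast
    also have "(\<Sum>k\<in>UNIV. cnj (v $ k) * (\<rho> *v v) $ k) = d j * (\<Sum>k\<in>UNIV. cnj (U $ k $ j) * U $ k $ j)"
      unfolding rv by (simp add: v_def sum_distrib_left mult_ac)
    finally show ?thesis using one by simp
  qed
  interpret unitary_conj U by unfold_locales (rule U)
  have "(\<Sum>j\<in>UNIV. d j) = 1"
    using rho trace_cj[of "cmat_diag d"] unfolding dec cj_def
    by (simp add: density_pos_def cmat_trace_def diag_entry)
  hence "(\<Sum>j\<in>UNIV. Re (d j)) = 1" by (metis Re_sum one_complex.simps(1))
  moreover have "Re (d i) \<le> (\<Sum>j\<in>UNIV. Re (d j))" by (rule member_le_sum) (auto intro: less_imp_le pos)
  ultimately show ?thesis using pos[of i] by simp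
qed

section \<open>Representation in an eigenbasis of rho\<close>

text \<open>Diagonal matrices with real entries, and the sums that represent $I$, $J$ and the commutator
  trace in an eigenbasis of $\rho$ (with $a,b,c$ the values of $f,g,h$ at the eigenvalues).\<close>

abbreviation rdiag :: "('n \<Rightarrow> real) \<Rightarrow> complex^'n^'n" where
  "rdiag a \<equiv> cmat_diag (\<lambda>i. complex_of_real (a i))"

definition diag_I :: "('n \<Rightarrow> real) \<Rightarrow> ('n \<Rightarrow> real) \<Rightarrow> ('n \<Rightarrow> real) \<Rightarrow> complex^'n^'n \<Rightarrow> real" where
  "diag_I a b c X = (\<Sum>i\<in>UNIV. \<Sum>j\<in>UNIV. (a i - a j) * (b i - b j) * c i * (cmod (X $ i $ j))^2) / 2"

definition diag_J :: "('n \<Rightarrow> real) \<Rightarrow> ('n \<Rightarrow> real) \<Rightarrow> ('n \<Rightarrow> real) \<Rightarrow> complex^'n^'n \<Rightarrow> real" where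
  "diag_J a b c X = (\<Sum>i\<in>UNIV. \<Sum>j\<in>UNIV. (a i + a j) * (b i + b j) * c i * (cmod (X $ i $ j))^2) / 2"

definition diag_T :: "('n \<Rightarrow> real) \<Rightarrow> ('n \<Rightarrow> real) \<Rightarrow> ('n \<Rightarrow> real) \<Rightarrow> complex^'n^'n \<Rightarrow> complex^'n^'n
    \<Rightarrow> complex" where
  "diag_T a b c X Y = (\<Sum>i\<in>UNIV. \<Sum>j\<in>UNIV. complex_of_real (a i * b i * c i - a j * b j * c j) * X $ i $ j * Y $ j $ i)"

lemma commutator_diag_entry: "commutator (rdiag a) X $ i $ j = complex_of_real (a i - a j) * X $ i $ j"
  unfolding commutator_def by (simp add: diag_mult_entry mult_diag_entry algebra_simps)

lemma anticommutator_diag_entry: "anticommutator (rdiag a) X $ i $ j = complex_of_real (a i + a j) * X $ i $ j"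
  unfolding anticommutator_def by (simp add: diag_mult_entry mult_diag_entry algebra_simps)

lemma trace_mult_rdiag: "cmat_trace (M ** rdiag c) = (\<Sum>i\<in>UNIV. M $ i $ i * complex_of_real (c i))"
  by (simp add: cmat_trace_def mult_diag_entry)

lemma hermitian_entry_sq: "cmat_hermitian X \<Longrightarrow> X $ i $ j * X $ j $ i = complex_of_real ((cmod (X $ i $ j))^2)"
  by (metis complex_norm_square hermitian_entry of_real_power)

lemma trace_I_diag:
  assumes X: "cmat_hermitian X"
  shows "Re (cmat_trace ((mat \<i> ** commutator (rdiag a) X) ** (mat \<i> ** commutator (rdiag b) X) ** rdiag c)) / 2
       = diag_I a b c X"
proof -
  have "((mat \<i> ** commutator (rdiag a) X) ** (mat \<i> ** commutator (rdiag b) X)) $ i $ i * complex_of_real (c i)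
      = (\<Sum>j\<in>UNIV. complex_of_real ((a i - a j) * (b i - b j) * c i * (cmod (X $ i $ j))^2))" for i
  proof -
    have "((mat \<i> ** commutator (rdiag a) X) ** (mat \<i> ** commutator (rdiag b) X)) $ i $ i
        = (\<Sum>j\<in>UNIV. complex_of_real ((a i - a j) * (b i - b j)) * (X $ i $ j * X $ j $ i))"
      unfolding matrix_mult_entry[of _ _ i i]
      by (intro sum.cong refl) (simp add: mat_mult_entry commutator_diag_entry algebra_simps)
    also have "\<dots> = (\<Sum>j\<in>UNIV. complex_of_real ((a i - a j) * (b i - b j) * (cmod (X $ i $ j))^2))"
      by (intro sum.cong refl) (simp add: hermitian_entry_sq[OF X])
    finally show ?thesis by (simp add: sum_distrib_right sum_distrib_left mult_ac)
  qed
  thus ?thesis unfolding diag_I_def trace_mult_rdiag by (simp add: Re_sum)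
qed

lemma trace_J_diag:
  assumes X: "cmat_hermitian X"
  shows "Re (cmat_trace (anticommutator (rdiag a) X ** anticommutator (rdiag b) X ** rdiag c)) / 2
       = diag_J a b c X"
proof -
  have "(anticommutator (rdiag a) X ** anticommutator (rdiag b) X) $ i $ i * complex_of_real (c i)
      = (\<Sum>j\<in>UNIV. complex_of_real ((a i + a j) * (b i + b j) * c i * (cmod (X $ i $ j))^2))" for i
  proof -
    have "(anticommutator (rdiag a) X ** anticommutator (rdiag b) X) $ i $ i
        = (\<Sum>j\<in>UNIV. complex_of_real ((a i + a j) * (b i + b j)) * (X $ i $ j * X $ j $ i))"
      unfolding matrix_mult_entry[of _ _ i i]
      by (intro sum.cong refl) (simp add: anticommutator_diag_entry algebra_simps)
    also have "\<dots> = (\<Sum>j\<in>UNIV. complex_of_real ((a i + a j) * (b i + b j) * (cmod (X $ i $ j))^2))"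
      by (intro sum.cong refl) (simp add: hermitian_entry_sq[OF X])
    finally show ?thesis by (simp add: sum_distrib_right sum_distrib_left mult_ac)
  qed
  thus ?thesis unfolding diag_J_def trace_mult_rdiag by (simp add: Re_sum)
qed

lemma trace_T_diag:
  "cmat_trace (rdiag a ** rdiag b ** rdiag c ** commutator X Y) = diag_T a b c X Y"
proof -
  define k where "k i = complex_of_real (a i * b i * c i)" for i
  have dd: "rdiag a ** rdiag b ** rdiag c = cmat_diag k"
    by (simp add: vec_eq_iff diag_mult_entry mult_diag_entry diag_entry k_def)
  have "cmat_trace (cmat_diag k ** commutator X Y)
      = (\<Sum>i\<in>UNIV. \<Sum>j\<in>UNIV. k i * X $ i $ j * Y $ j $ i) - (\<Sum>i\<in>UNIV. \<Sum>j\<in>UNIV. k i * Y $ i $ j * X $ j $ i)"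
    unfolding commutator_def cmat_trace_def diag_mult_entry
    by (simp add: matrix_mult_entry sum_distrib_left right_diff_distrib sum_subtractf mult_ac)
  also have "(\<Sum>i\<in>UNIV. \<Sum>j\<in>UNIV. k i * Y $ i $ j * X $ j $ i) = (\<Sum>i\<in>UNIV. \<Sum>j\<in>UNIV. k j * X $ i $ j * Y $ j $ i)"
    by (subst sum.swap) (simp add: mult_ac)
  finally show ?thesis
    unfolding dd diag_T_def k_def by (simp add: sum_subtractf[symmetric] left_diff_distrib)
qed

lemma commutator_shift: "commutator ((A::complex^'n^'n) - mat a) (B - mat b) = commutator A B"
proof -
  have "mat a ** B = B ** mat a" "mat b ** A = A ** mat b" "mat a ** (mat b :: complex^'n^'n) = mat b ** mat a"
    by (rule mat_mult_comm)+
  thus ?thesis unfolding commutator_def by (simp add: matrix_sub_ldistrib matrix_sub_rdistrib algebra_simps)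
qed

text \<open>Centering preserves Hermiticity, since $\mathrm{Tr}[\rho H]$ is real.\<close>

lemma hermitian_centered:
  assumes R: "cmat_hermitian (R::complex^'n^'n)" and A: "cmat_hermitian A"
  shows "cmat_hermitian (centered R A)"
proof -
  have "cnj (cmat_trace (R ** A)) = cmat_trace (cmat_adjoint (R ** A))"
    by (simp add: cmat_trace_def adjoint_entry)
  also have "\<dots> = cmat_trace (R ** A)"
    using R A cmat_trace_mult_comm[of A R] by (simp add: adjoint_mult cmat_hermitian_def)
  finally have "cnj (cmat_trace (R ** A)) = cmat_trace (R ** A)" .
  moreover have "cmat_adjoint (A - mat c) = cmat_adjoint A - mat (cnj c)" for c
    by (simp add: vec_eq_iff adjoint_entry mat_entry)
  ultimately show ?thesis using A unfolding centered_def cmat_hermitian_def by simp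
qed

lemma hermitian_unitary_conj:
  assumes "cmat_hermitian (H::complex^'n^'n)"
  shows "cmat_hermitian (cmat_adjoint U ** H ** U)"
proof -
  have "cmat_adjoint (cmat_adjoint U) = U" by (simp add: vec_eq_iff adjoint_entry)
  thus ?thesis using assms unfolding cmat_hermitian_def by (simp add: adjoint_mult matrix_mul_assoc)
qed

lemma correlations_in_eigenbasis:
  fixes \<rho> A U :: "complex^'n^'n"
  assumes U: "cmat_unitary U" and d: "\<forall>i. d i \<in> \<real>" and dec: "\<rho> = U ** cmat_diag d ** cmat_adjoint U"
    and rho: "cmat_hermitian \<rho>" and A: "cmat_hermitian A"
  shows "I_corr \<rho> f g h A = diag_I (\<lambda>i. f (Re (d i))) (\<lambda>i. g (Re (d i))) (\<lambda>i. h (Re (d i)))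
           (cmat_adjoint U ** centered \<rho> A ** U)"
    and "J_corr \<rho> f g h A = diag_J (\<lambda>i. f (Re (d i))) (\<lambda>i. g (Re (d i))) (\<lambda>i. h (Re (d i)))
           (cmat_adjoint U ** centered \<rho> A ** U)"
proof -
  interpret unitary_conj U by unfold_locales (rule U)
  define X where "X = cmat_adjoint U ** centered \<rho> A ** U"
  have mf: "mat_fun k \<rho> = cj (rdiag (\<lambda>i. k (Re (d i))))" for k
    unfolding mat_fun_eq[OF U d dec] cj_def ..
  have cA: "centered \<rho> A = cj X" unfolding X_def cj_adjoint_conj ..
  have X: "cmat_hermitian X" unfolding X_def by (intro hermitian_unitary_conj hermitian_centered rho A)
  show "I_corr \<rho> f g h A = diag_I (\<lambda>i. f (Re (d i))) (\<lambda>i. g (Re (d i))) (\<lambda>i. h (Re (d i))) X"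
    unfolding I_corr_def Let_def cA mf
    by (simp only: cj_commutator cj_mat_mult cj_mult trace_cj trace_I_diag[OF X])
  show "J_corr \<rho> f g h A = diag_J (\<lambda>i. f (Re (d i))) (\<lambda>i. g (Re (d i))) (\<lambda>i. h (Re (d i))) X"
    unfolding J_corr_def Let_def cA mf
    by (simp only: cj_anticommutator cj_mult trace_cj trace_J_diag[OF X])
qed

text \<open>The commutator trace $\mathrm{Tr}[f(\rho)g(\rho)h(\rho)[A,B]]$ in an eigenbasis of $\rho$;
  centering $A$ and $B$ does not change it.\<close>

lemma commutator_trace_in_eigenbasis:
  fixes \<rho> A B U :: "complex^'n^'n"
  assumes U: "cmat_unitary U" and d: "\<forall>i. d i \<in> \<real>" and dec: "\<rho> = U ** cmat_diag d ** cmat_adjoint U"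
  shows "cmat_trace (mat_fun f \<rho> ** mat_fun g \<rho> ** mat_fun h \<rho> ** commutator A B)
       = diag_T (\<lambda>i. f (Re (d i))) (\<lambda>i. g (Re (d i))) (\<lambda>i. h (Re (d i)))
           (cmat_adjoint U ** centered \<rho> A ** U) (cmat_adjoint U ** centered \<rho> B ** U)"
proof -
  interpret unitary_conj U by unfold_locales (rule U)
  have mf: "mat_fun k \<rho> = cj (rdiag (\<lambda>i. k (Re (d i))))" for k
    unfolding mat_fun_eq[OF U d dec] cj_def ..
  have "commutator A B = commutator (centered \<rho> A) (centered \<rho> B)"
    unfolding centered_def by (rule commutator_shift[symmetric])
  also have "\<dots> = cj (commutator (cmat_adjoint U ** centered \<rho> A ** U) (cmat_adjoint U ** centered \<rho> B ** U))"
    by (simp only: cj_adjoint_conj cj_commutator[symmetric])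
  finally show ?thesis unfolding mf by (simp only: cj_mult trace_cj trace_T_diag)
qed

section \<open>The uncertainty relation for diagonal data\<close>

lemma double_sum_symmetrize:
  fixes w :: "'n::finite \<Rightarrow> 'n \<Rightarrow> real" and c :: "'n \<Rightarrow> real"
  assumes "\<And>i j. w i j = w j i"
  shows "(\<Sum>i\<in>UNIV. \<Sum>j\<in>UNIV. w i j * c i) = (\<Sum>i\<in>UNIV. \<Sum>j\<in>UNIV. w i j * (c i + c j)) / 2"
proof -
  have "(\<Sum>i\<in>UNIV. \<Sum>j\<in>UNIV. w i j * c j) = (\<Sum>j\<in>UNIV. \<Sum>i\<in>UNIV. w j i * c j)"
    by (subst sum.swap) (simp add: assms)
  thus ?thesis by (simp add: distrib_left sum.distrib)
qed

lemma double_sum_pairs: "(\<Sum>i\<in>UNIV. \<Sum>j\<in>UNIV. F i j) = (\<Sum>p\<in>UNIV. F (fst p) (snd p))"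
  unfolding UNIV_Times_UNIV[symmetric] sum.cartesian_product by (simp add: case_prod_beta)

lemma hermitian_cmod_sym: "cmat_hermitian X \<Longrightarrow> cmod (X $ j $ i) = cmod (X $ i $ j)"
  by (simp add: hermitian_entry[of X j i])

text \<open>Symmetrized forms of the $I$ and $J$ sums, with weights $u_{ij}, v_{ij} \ge 0$ satisfying
  $u_{ij} v_{ij} = (a_i-a_j)(b_i-b_j)(a_i+a_j)(b_i+b_j)(c_i+c_j)^2/16$.\<close>

lemma diag_I_pair_sum:
  assumes X: "cmat_hermitian X"
  shows "diag_I a b c X = (\<Sum>p\<in>UNIV. (a (fst p) - a (snd p)) * (b (fst p) - b (snd p))
           * (c (fst p) + c (snd p)) / 4 * (cmod (X $ fst p $ snd p))^2)"
proof -
  have "diag_I a b c X = (\<Sum>i\<in>UNIV. \<Sum>j\<in>UNIV. ((a i - a j) * (b i - b j) * (cmod (X $ i $ j))^2) * c i) / 2"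
    unfolding diag_I_def by (simp add: mult_ac)
  also have "\<dots> = (\<Sum>i\<in>UNIV. \<Sum>j\<in>UNIV. (a i - a j) * (b i - b j) * (c i + c j) / 4 * (cmod (X $ i $ j))^2)"
    by (subst double_sum_symmetrize) (auto simp: hermitian_cmod_sym[OF X] algebra_simps sum_divide_distrib)
  finally show ?thesis unfolding double_sum_pairs .
qed

lemma diag_J_pair_sum:
  assumes X: "cmat_hermitian X"
  shows "diag_J a b c X = (\<Sum>p\<in>UNIV. (a (fst p) + a (snd p)) * (b (fst p) + b (snd p))
           * (c (fst p) + c (snd p)) / 4 * (cmod (X $ fst p $ snd p))^2)"
proof -
  have "diag_J a b c X = (\<Sum>i\<in>UNIV. \<Sum>j\<in>UNIV. ((a i + a j) * (b i + b j) * (cmod (X $ i $ j))^2) * c i) / 2"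
    unfolding diag_J_def by (simp add: mult_ac)
  also have "\<dots> = (\<Sum>i\<in>UNIV. \<Sum>j\<in>UNIV. (a i + a j) * (b i + b j) * (c i + c j) / 4 * (cmod (X $ i $ j))^2)"
    by (subst double_sum_symmetrize) (auto simp: hermitian_cmod_sym[OF X] algebra_simps sum_divide_distrib)
  finally show ?thesis unfolding double_sum_pairs .
qed

lemma weighted_cauchy_schwarz:
  fixes k u v x y :: "'a \<Rightarrow> real"
  assumes fin: "finite S" and \<beta>: "0 \<le> \<beta>"
    and bound: "\<And>p. p \<in> S \<Longrightarrow> \<beta> * (k p)^2 \<le> u p * v p"
    and nonneg: "\<And>p. p \<in> S \<Longrightarrow> 0 \<le> u p \<and> 0 \<le> v p \<and> 0 \<le> x p \<and> 0 \<le> y p"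
  shows "\<beta> * (\<Sum>p\<in>S. \<bar>k p\<bar> * x p * y p)^2 \<le> (\<Sum>p\<in>S. u p * (x p)^2) * (\<Sum>p\<in>S. v p * (y p)^2)"
proof -
  have root: "sqrt \<beta> * \<bar>k p\<bar> \<le> sqrt (u p) * sqrt (v p)" if "p \<in> S" for p
    using real_sqrt_le_mono[OF bound[OF that]] by (simp add: real_sqrt_mult)
  have "sqrt \<beta> * (\<Sum>p\<in>S. \<bar>k p\<bar> * x p * y p) = (\<Sum>p\<in>S. (sqrt \<beta> * \<bar>k p\<bar>) * (x p * y p))"
    by (simp add: sum_distrib_left mult_ac)
  also have "\<dots> \<le> (\<Sum>p\<in>S. (sqrt (u p) * sqrt (v p)) * (x p * y p))"
    using root nonneg by (intro sum_mono mult_right_mono) auto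
  also have "\<dots> = (\<Sum>p\<in>S. (sqrt (u p) * x p) * (sqrt (v p) * y p))" by (simp add: mult_ac)
  finally have le: "sqrt \<beta> * (\<Sum>p\<in>S. \<bar>k p\<bar> * x p * y p) \<le> \<dots>" .
  have "0 \<le> sqrt \<beta> * (\<Sum>p\<in>S. \<bar>k p\<bar> * x p * y p)"
    using nonneg \<beta> by (intro mult_nonneg_nonneg sum_nonneg) auto
  hence "(sqrt \<beta> * (\<Sum>p\<in>S. \<bar>k p\<bar> * x p * y p))^2 \<le> (\<Sum>p\<in>S. (sqrt (u p) * x p) * (sqrt (v p) * y p))^2"
    by (rule power_mono[OF le])
  also have "\<dots> \<le> (\<Sum>p\<in>S. (sqrt (u p) * x p)^2) * (\<Sum>p\<in>S. (sqrt (v p) * y p)^2)"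
    by (rule Cauchy_Schwarz_ineq_sum)
  also have "\<dots> = (\<Sum>p\<in>S. u p * (x p)^2) * (\<Sum>p\<in>S. v p * (y p)^2)"
    using nonneg by (simp add: power_mult_distrib)
  finally show ?thesis using \<beta> by (simp add: power_mult_distrib)
qed

lemma sqrt_products_bound:
  fixes q I1 J1 I2 J2 :: real
  assumes "0 \<le> q" "q \<le> I1 * J2" "q \<le> J1 * I2"
  shows "q \<le> sqrt (I1 * J1) * sqrt (I2 * J2)"
proof -
  have "q^2 \<le> (I1 * J2) * (J1 * I2)"
    unfolding power2_eq_square using assms by (intro mult_mono) auto
  hence "q \<le> sqrt ((I1 * J2) * (J1 * I2))" by (rule real_le_rsqrt)
  thus ?thesis by (simp add: real_sqrt_mult[symmetric] mult_ac)
qed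

lemma diag_T_norm_le:
  assumes Y: "cmat_hermitian Y"
  shows "cmod (diag_T a b c X Y)
    \<le> (\<Sum>p\<in>UNIV. \<bar>a (fst p) * b (fst p) * c (fst p) - a (snd p) * b (snd p) * c (snd p)\<bar>
          * cmod (X $ fst p $ snd p) * cmod (Y $ fst p $ snd p))"
proof -
  have "cmod (diag_T a b c X Y) \<le> (\<Sum>p\<in>UNIV. cmod (complex_of_real
      (a (fst p) * b (fst p) * c (fst p) - a (snd p) * b (snd p) * c (snd p))
        * X $ fst p $ snd p * Y $ snd p $ fst p))"
    unfolding diag_T_def double_sum_pairs by (rule norm_sum)
  thus ?thesis by (simp add: norm_mult hermitian_cmod_sym[OF Y] of_real_diff[symmetric] del: of_real_diff)
qed

text \<open>Bound $|T|$ by $\sum |k_{ij}| |X_{ij}| |Y_{ij}|$ and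
  apply weighted Cauchy--Schwarz twice, to obtain $\beta|T|^2 \le I(X)J(Y)$ and
  $\beta|T|^2 \le J(X)I(Y)$; their geometric mean is the claim.\<close>

lemma diag_uncertainty:
  fixes a b c :: "'n::finite \<Rightarrow> real" and X Y :: "complex^'n^'n"
  assumes X: "cmat_hermitian X" and Y: "cmat_hermitian Y"
    and mono: "\<And>i j. 0 \<le> (a i - a j) * (b i - b j)"
    and nonneg: "\<And>i. 0 \<le> a i" "\<And>i. 0 \<le> b i" "\<And>i. 0 \<le> c i"
    and pair: "\<And>i j. 16 * \<beta> * (a i * b i * c i - a j * b j * c j)^2
        \<le> (a i - a j) * (b i - b j) * (a i + a j) * (b i + b j) * (c i + c j)^2"
  shows "\<beta> * (cmod (diag_T a b c X Y))^2
           \<le> sqrt (diag_I a b c X * diag_J a b c X) * sqrt (diag_I a b c Y * diag_J a b c Y)"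
proof -
  define k where "k p = a (fst p) * b (fst p) * c (fst p) - a (snd p) * b (snd p) * c (snd p)" for p
  define u where "u p = (a (fst p) - a (snd p)) * (b (fst p) - b (snd p)) * (c (fst p) + c (snd p)) / 4" for p
  define v where "v p = (a (fst p) + a (snd p)) * (b (fst p) + b (snd p)) * (c (fst p) + c (snd p)) / 4" for p
  define x where "x p = cmod (X $ fst p $ snd p)" for p
  define y where "y p = cmod (Y $ fst p $ snd p)" for p
  define S where "S = (\<Sum>p\<in>UNIV. \<bar>k p\<bar> * x p * y p)"
  have nonneg_uvxy: "0 \<le> u p \<and> 0 \<le> v p \<and> 0 \<le> x p \<and> 0 \<le> y p" for p
    unfolding u_def v_def x_def y_def using mono nonneg by auto
  have IJ: "diag_I a b c X = (\<Sum>p\<in>UNIV. u p * (x p)^2)" "diag_J a b c X = (\<Sum>p\<in>UNIV. v p * (x p)^2)"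
    "diag_I a b c Y = (\<Sum>p\<in>UNIV. u p * (y p)^2)" "diag_J a b c Y = (\<Sum>p\<in>UNIV. v p * (y p)^2)"
    unfolding diag_I_pair_sum[OF X] diag_J_pair_sum[OF X] diag_I_pair_sum[OF Y] diag_J_pair_sum[OF Y]
      u_def v_def x_def y_def by simp_all
  have T_le: "cmod (diag_T a b c X Y) \<le> S"
    using diag_T_norm_le[OF Y] unfolding S_def k_def x_def y_def .
  show ?thesis
  proof (cases "\<beta> \<le> 0")
    case True
    have "0 \<le> diag_I a b c X * diag_J a b c X" "0 \<le> diag_I a b c Y * diag_J a b c Y"
      unfolding IJ using nonneg_uvxy by (auto intro!: mult_nonneg_nonneg sum_nonneg)
    hence "0 \<le> sqrt (diag_I a b c X * diag_J a b c X) * sqrt (diag_I a b c Y * diag_J a b c Y)" by simp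
    moreover have "\<beta> * (cmod (diag_T a b c X Y))^2 \<le> 0" using True by (simp add: mult_nonpos_nonneg)
    ultimately show ?thesis by linarith
  next
    case False
    have bound: "\<beta> * (k p)^2 \<le> u p * v p" for p
      using pair[of "fst p" "snd p"] unfolding k_def u_def v_def by (simp add: power2_eq_square algebra_simps)
    have q0: "0 \<le> \<beta> * (cmod (diag_T a b c X Y))^2" using False by simp
    have TS: "\<beta> * (cmod (diag_T a b c X Y))^2 \<le> \<beta> * S^2"
      using T_le False by (intro mult_left_mono power_mono) auto
    have "\<beta> * S^2 \<le> diag_I a b c X * diag_J a b c Y" unfolding IJ S_def
      using False nonneg_uvxy by (intro weighted_cauchy_schwarz bound) auto
    moreover have "\<beta> * S^2 \<le> diag_J a b c X * diag_I a b c Y" unfolding IJ S_def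
      using False nonneg_uvxy bound by (intro weighted_cauchy_schwarz) (auto simp: mult.commute)
    ultimately show ?thesis using q0 TS by (intro sqrt_products_bound) linarith+
  qed
qed

theorem theorem3p1:
  fixes f g h :: "real \<Rightarrow> real"
    and \<rho> A B :: "complex^'n^'n"
  assumes f_cont: "continuous_on {0..1} f" and g_cont: "continuous_on {0..1} g"
      and h_cont: "continuous_on {0..1} h"
    and f_nonneg: "\<forall>x\<in>{0..1}. 0 \<le> f x" and g_nonneg: "\<forall>x\<in>{0..1}. 0 \<le> g x"
      and h_nonneg: "\<forall>x\<in>{0..1}. 0 \<le> h x"
    and f_diff: "\<forall>x\<in>{0<..<1}. f differentiable (at x)"
      and g_diff: "\<forall>x\<in>{0<..<1}. g differentiable (at x)"
      and h_diff: "\<forall>x\<in>{0<..<1}. h differentiable (at x)"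
    and f_pos: "\<forall>x\<in>{0<..1}. 0 < f x" and g_pos: "\<forall>x\<in>{0<..1}. 0 < g x"
      and h_pos: "\<forall>x\<in>{0<..1}. 0 < h x"
    and F_deriv_nz: "\<forall>x\<in>{0<..<1}. deriv (\<lambda>t. ln (f t)) x \<noteq> 0"
    and F_inj: "inj_on (\<lambda>t. ln (f t)) {0<..1}"
    and cases:
      "(cli_monotone_pair f g \<and> cli_monotone_pair f h \<and>
          (\<forall>x\<in>{0<..1}. \<forall>y\<in>{0<..1}. x < y \<longrightarrow>
             1 + (ln (g y) - ln (g x)) / (ln (f y) - ln (f x))
               \<le> (ln (h y) - ln (h x)) / (ln (f y) - ln (f x))))
       \<or> (cli_monotone_pair f g \<and> cli_antimonotone_pair f h \<and>
          (\<forall>x\<in>{0<..1}. \<forall>y\<in>{0<..1}. x < y \<longrightarrow>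
             1 + (ln (g y) - ln (g x)) / (ln (f y) - ln (f x))
               + (ln (h y) - ln (h x)) / (ln (f y) - ln (f x)) \<ge> 0))"
    and rho: "density_pos \<rho>"
    and A_sa: "cmat_hermitian A" and B_sa: "cmat_hermitian B"
  shows "U_corr \<rho> f g h A * U_corr \<rho> f g h B
           \<ge> beta_const f g h *
             (cmod (cmat_trace (mat_fun f \<rho> ** mat_fun g \<rho> ** mat_fun h \<rho> ** commutator A B)))^2"
proof -
  interpret cli_triple f g h
    by unfold_locales (fact f_cont g_cont h_cont f_diff g_diff h_diff f_pos g_pos h_pos F_deriv_nz F_inj cases)+
  have herm: "cmat_hermitian \<rho>" using rho unfolding density_pos_def cmat_posdef_def by blast
  obtain U d where U: "cmat_unitary U" and d: "\<forall>i. d i \<in> \<real>"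
    and dec: "\<rho> = U ** cmat_diag d ** cmat_adjoint U"
    using hermitian_spectral[OF herm] by blast
  define a b c where "a i = f (Re (d i))" and "b i = g (Re (d i))" and "c i = h (Re (d i))" for i
  define X Y where "X = cmat_adjoint U ** centered \<rho> A ** U" and "Y = cmat_adjoint U ** centered \<rho> B ** U"
  have eigs: "Re (d i) \<in> {0<..1}" for i by (rule density_eigenvalues[OF rho U dec])
  have fg_mono: "\<forall>x\<in>{0..1}. \<forall>y\<in>{0..1}. 0 \<le> (f x - f y) * (g x - g y)"
    using cases unfolding cli_monotone_pair_def by blast
  have "beta_const f g h * (cmod (diag_T a b c X Y))^2
      \<le> sqrt (diag_I a b c X * diag_J a b c X) * sqrt (diag_I a b c Y * diag_J a b c Y)"
  proof (rule diag_uncertainty)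
    show "cmat_hermitian X" "cmat_hermitian Y"
      unfolding X_def Y_def by (intro hermitian_unitary_conj hermitian_centered herm A_sa B_sa)+
    show "0 \<le> (a i - a j) * (b i - b j)" for i j
      using fg_mono eigs[of i] eigs[of j] unfolding a_def b_def by simp
    show "0 \<le> a i" "0 \<le> b i" "0 \<le> c i" for i
      using f_pos g_pos h_pos eigs unfolding a_def b_def c_def by (auto simp: less_imp_le)
    show "16 * beta_const f g h * (a i * b i * c i - a j * b j * c j)^2
        \<le> (a i - a j) * (b i - b j) * (a i + a j) * (b i + b j) * (c i + c j)^2" for i j
      unfolding a_def b_def c_def by (rule pair_bound[OF eigs eigs])
  qed
  thus ?thesis
    unfolding U_corr_def a_def b_def c_def X_def Y_def
      correlations_in_eigenbasis[OF U d dec herm A_sa] correlations_in_eigenbasis[OF U d dec herm B_sa]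
      commutator_trace_in_eigenbasis[OF U d dec]
    by (simp add: real_sqrt_mult)
qed

end
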